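(* Let $T$ be a $\delta$-Jordan Lie supertriple system over a field $\mathbb{K}$ with $H^3_\delta(T,T)=0$. Then $T$ is analytically rigid, i.e. every 1-parameter formal deformation $f_t$ of $T$ is equivalent to the null deformation $f_0$.
   Context: A $\delta$-Jordan Lie supertriple system ($\delta\in\{1,-1\}$) is a $\mathbb{Z}_2$-graded vector space $T$ with a trilinear product $[\cdot,\cdot,\cdot]$ such that, for all homogeneous $a,b,c,d,e$ (with $|a|$ the degree of $a$): (A1) $|[a,b,c]|=|a|+|b|+|c|$; (A2) $[b,a,c]=-\delta(-1)^{|a||b|}[a,b,c]$; (A3) $(-1)^{|a||c|}[a,b,c]+(-1)^{|b||a|}[b,c,a]+(-1)^{|c||b|}[c,a,b]=0$; (A4) $[a,b,[c,d,e]]=[[a,b,c],d,e]+(-1)^{|c|(|a|+|b|)}[c,[a,b,d],e]+\delta(-1)^{(|a|+|b|)(|c|+|d|)}[c,d,[a,b,e]]$. A 1-parameter formal deformation of $T$ is $f_t=\sum_{i\ge0}f_i t^i$ where each $f_i:T\times T\times T\to T$ is $\mathbb{K}$-trilinear (extended $\mathbb{K}[[t]]$-trilinearly to $T[[t]]$), $f_0(x_1,x_2,x_3)=[x_1,x_2,x_3]$, and $f_t$ satisfies (A1)–(A4) with $[\cdot,\cdot,\cdot]$ replaced by $f_t$. The null deformation is the one with $f_i=0$ for all $i\ge1$ (i.e. $f_t=f_0$). Two deformations $f_t,f'_t$ are equivalent if there is $\phi_t=\sum_{i\ge0}\phi_it^i$, $\phi_0=id_T$, $\phi_i:T\to T$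 $\mathbb{K}$-linear (extended $\mathbb{K}[[t]]$-linearly), with $\phi_t f_t(x_1,x_2,x_3)=f'_t(\phi_t(x_1),\phi_t(x_2),\phi_t(x_3))$ for all $x_1,x_2,x_3$. Cohomology with adjoint coefficients: let $\theta(a,b)(x)=(-1)^{|x|(|a|+|b|)}[x,a,b]$ and $D(a,b)(x)=\delta[a,b,x]$. $C^1_\delta(T,T)$ is the space of linear maps $T\to T$; $C^3_\delta(T,T)$ is the space of trilinear $f:T^3\to T$ with $f(x_2,x_1,x_3)=-\delta(-1)^{|x_1||x_2|}f(x_1,x_2,x_3)$ and $(-1)^{|x_1||x_3|}f(x_1,x_2,x_3)+(-1)^{|x_2||x_1|}f(x_2,x_3,x_1)+(-1)^{|x_3||x_2|}f(x_3,x_1,x_2)=0$. For homogeneous $f$: $d^{1}f(x_1,x_2,x_3)=(-1)^{(|f|+|x_1|)(|x_2|+|x_3|)}\theta(x_2,x_3)f(x_1)-f([x_1,x_2,x_3])+\delta(-1)^{|f|(|x_1|+|x_2|)}D(x_1,x_2)f(x_3)-\delta(-1)^{|x_2||x_3|+|f|(|x_1|+|x_3|)}\theta(x_1,x_3)f(x_2)$; $d^{3}f(x_1,\dots,x_5)=(-1)^{(|f|+|x_1|+|x_2|+|x_3|)(|x_4|+|x_5|)}\theta(x_4,x_5)f(x_1,x_2,x_3)-\delta(-1)^{(|f|+|x_1|+|x_2|)(|x_3|+|x_5|)+|x_4||x_5|}\theta(x_3,x_5)f(x_1,x_2,x_4)-\delta(-1)^{|f|(|x_1|+|x_2|)}D(x_1,x_2)f(x_3,x_4,x_5)+(-1)^{(|f|+|x_1|+|x_2|)(|x_3|+|x_4|)}D(x_3,x_4)f(x_1,x_2,x_5)+f([x_1,x_2,x_3],x_4,x_5)-f(x_1,x_2,[x_3,x_4,x_5])+(-1)^{|x_3|(|x_1|+|x_2|)}f(x_3,[x_1,x_2,x_4],x_5)+\delta(-1)^{(|x_1|+|x_2|)(|x_3|+|x_4|)}f(x_3,x_4,[x_1,x_2,x_5])$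 (extended linearly). $Z^3_\delta(T,T)=\{f\in C^3_\delta(T,T)\mid d^3f=0\}$, $B^3_\delta(T,T)=d^1C^1_\delta(T,T)$, and $H^3_\delta(T,T)=Z^3_\delta(T,T)/B^3_\delta(T,T)$. *)

theory Defs
  imports Complex_Main
begin

text \<open>The underlying space T is a type 'v with a K-vector space structure
 given by a scalar multiplication sc (K a field 'k). The Z2-grading is T = T0 (+) T1.
 Degrees are natural numbers; only their parity matters. Power series T[[t]] are
 functions nat => 'v (coefficient sequences).\<close>

definition sg :: "nat \<Rightarrow> 'k::field" where
  "sg n = (-1) ^ n"

definition hom :: "'v set \<Rightarrow> 'v set \<Rightarrow> nat \<Rightarrow> 'v set" where
  "hom T0 T1 d = (if even d then T0 else T1)"

definition graded_space :: "('k::field \<Rightarrow> 'v::ab_group_add \<Rightarrow> 'v) \<Rightarrow> 'v set \<Rightarrow> 'v set \<Rightarrow> bool" where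
  "graded_space sc T0 T1 \<longleftrightarrow> vector_space sc \<and> module.subspace sc T0 \<and> module.subspace sc T1
     \<and> T0 \<inter> T1 = {0} \<and> (\<forall>v. \<exists>a\<in>T0. \<exists>b\<in>T1. v = a + b)"

definition proj :: "'v set \<Rightarrow> 'v set \<Rightarrow> nat \<Rightarrow> 'v::ab_group_add \<Rightarrow> 'v" where
  "proj T0 T1 d v = (THE w. w \<in> hom T0 T1 d \<and> v - w \<in> hom T0 T1 (Suc d))"

definition trilinear :: "('k::field \<Rightarrow> 'v::ab_group_add \<Rightarrow> 'v) \<Rightarrow> ('v \<Rightarrow> 'v \<Rightarrow> 'v \<Rightarrow> 'v) \<Rightarrow> bool" where
  "trilinear sc f \<longleftrightarrow> (\<forall>y z. Vector_Spaces.linear sc sc (\<lambda>x. f x y z))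
     \<and> (\<forall>x z. Vector_Spaces.linear sc sc (\<lambda>y. f x y z))
     \<and> (\<forall>x y. Vector_Spaces.linear sc sc (\<lambda>z. f x y z))"

text \<open>Axioms (A1)-(A4) for a product P on a graded space given abstractly by
 addition ad, zero z, scalar multiplication sc and homogeneous parts H d.\<close>
definition jlsts_ax :: "('x \<Rightarrow> 'x \<Rightarrow> 'x) \<Rightarrow> 'x \<Rightarrow> ('k::field \<Rightarrow> 'x \<Rightarrow> 'x) \<Rightarrow> (nat \<Rightarrow> 'x set)
    \<Rightarrow> 'k \<Rightarrow> ('x \<Rightarrow> 'x \<Rightarrow> 'x \<Rightarrow> 'x) \<Rightarrow> bool" where
  "jlsts_ax ad z sc H \<delta> P \<longleftrightarrow>
    (\<forall>da db dc a b c. a \<in> H da \<longrightarrow> b \<in> H db \<longrightarrow> c \<in> H dc \<longrightarrow>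
        P a b c \<in> H (da + db + dc)
      \<and> P b a c = sc (- \<delta> * sg (da * db)) (P a b c)
      \<and> ad (ad (sc (sg (da * dc)) (P a b c)) (sc (sg (db * da)) (P b c a)))
           (sc (sg (dc * db)) (P c a b)) = z)
  \<and> (\<forall>da db dc dd de a b c d e. a \<in> H da \<longrightarrow> b \<in> H db \<longrightarrow> c \<in> H dc \<longrightarrow>
        d \<in> H dd \<longrightarrow> e \<in> H de \<longrightarrow>
      P a b (P c d e) =
        ad (ad (P (P a b c) d e) (sc (sg (dc * (da + db))) (P c (P a b d) e)))
           (sc (\<delta> * sg ((da + db) * (dc + dd))) (P c d (P a b e))))"

definition jlsts :: "('k::field \<Rightarrow> 'v::ab_group_add \<Rightarrow> 'v) \<Rightarrow> 'v set \<Rightarrow> 'v set \<Rightarrow> 'k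
    \<Rightarrow> ('v \<Rightarrow> 'v \<Rightarrow> 'v \<Rightarrow> 'v) \<Rightarrow> bool" where
  "jlsts sc T0 T1 \<delta> br \<longleftrightarrow> graded_space sc T0 T1 \<and> (\<delta> = 1 \<or> \<delta> = -1) \<and> trilinear sc br
     \<and> jlsts_ax (+) 0 sc (hom T0 T1) \<delta> br"

definition theta :: "('k::field \<Rightarrow> 'v \<Rightarrow> 'v) \<Rightarrow> ('v \<Rightarrow> 'v \<Rightarrow> 'v \<Rightarrow> 'v) \<Rightarrow> 'v \<Rightarrow> nat \<Rightarrow> 'v \<Rightarrow> nat
    \<Rightarrow> 'v \<Rightarrow> nat \<Rightarrow> 'v" where
  "theta sc br a da b db x dx = sc (sg (dx * (da + db))) (br x a b)"

definition Dop :: "('k::field \<Rightarrow> 'v \<Rightarrow> 'v) \<Rightarrow> ('v \<Rightarrow> 'v \<Rightarrow> 'v \<Rightarrow> 'v) \<Rightarrow> 'k \<Rightarrow> 'v \<Rightarrow> 'v \<Rightarrow> 'v \<Rightarrow> 'v" where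
  "Dop sc br \<delta> a b x = sc \<delta> (br a b x)"

definition C3 :: "('k::field \<Rightarrow> 'v::ab_group_add \<Rightarrow> 'v) \<Rightarrow> 'v set \<Rightarrow> 'v set \<Rightarrow> 'k
    \<Rightarrow> ('v \<Rightarrow> 'v \<Rightarrow> 'v \<Rightarrow> 'v) \<Rightarrow> bool" where
  "C3 sc T0 T1 \<delta> f \<longleftrightarrow> trilinear sc f \<and>
    (\<forall>d1 d2 d3 x1 x2 x3. x1 \<in> hom T0 T1 d1 \<longrightarrow> x2 \<in> hom T0 T1 d2 \<longrightarrow> x3 \<in> hom T0 T1 d3 \<longrightarrow>
       f x2 x1 x3 = sc (- \<delta> * sg (d1 * d2)) (f x1 x2 x3)
     \<and> sc (sg (d1 * d3)) (f x1 x2 x3) + sc (sg (d2 * d1)) (f x2 x3 x1)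
         + sc (sg (d3 * d2)) (f x3 x1 x2) = 0)"

text \<open>homogeneous components (of degree e) of a linear / trilinear map, evaluated at
 homogeneous arguments with given degrees\<close>
definition comp1 :: "'v set \<Rightarrow> 'v set \<Rightarrow> ('v::ab_group_add \<Rightarrow> 'v) \<Rightarrow> nat \<Rightarrow> 'v \<Rightarrow> nat \<Rightarrow> 'v" where
  "comp1 T0 T1 g e x d = proj T0 T1 (d + e) (g x)"

definition comp3 :: "'v set \<Rightarrow> 'v set \<Rightarrow> ('v::ab_group_add \<Rightarrow> 'v \<Rightarrow> 'v \<Rightarrow> 'v) \<Rightarrow> nat
    \<Rightarrow> 'v \<Rightarrow> nat \<Rightarrow> 'v \<Rightarrow> nat \<Rightarrow> 'v \<Rightarrow> nat \<Rightarrow> 'v" where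
  "comp3 T0 T1 f e x1 d1 x2 d2 x3 d3 = proj T0 T1 (d1 + d2 + d3 + e) (f x1 x2 x3)"

definition d1hom :: "('k::field \<Rightarrow> 'v::ab_group_add \<Rightarrow> 'v) \<Rightarrow> ('v \<Rightarrow> 'v \<Rightarrow> 'v \<Rightarrow> 'v) \<Rightarrow> 'k
    \<Rightarrow> ('v \<Rightarrow> nat \<Rightarrow> 'v) \<Rightarrow> nat \<Rightarrow> 'v \<Rightarrow> nat \<Rightarrow> 'v \<Rightarrow> nat \<Rightarrow> 'v \<Rightarrow> nat \<Rightarrow> 'v" where
  "d1hom sc br \<delta> g e x1 d1 x2 d2 x3 d3 =
     sc (sg ((e + d1) * (d2 + d3))) (theta sc br x2 d2 x3 d3 (g x1 d1) (e + d1))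
   - g (br x1 x2 x3) (d1 + d2 + d3)
   + sc (\<delta> * sg (e * (d1 + d2))) (Dop sc br \<delta> x1 x2 (g x3 d3))
   - sc (\<delta> * sg (d2 * d3 + e * (d1 + d3))) (theta sc br x1 d1 x3 d3 (g x2 d2) (e + d2))"

definition d3hom :: "('k::field \<Rightarrow> 'v::ab_group_add \<Rightarrow> 'v) \<Rightarrow> ('v \<Rightarrow> 'v \<Rightarrow> 'v \<Rightarrow> 'v) \<Rightarrow> 'k
    \<Rightarrow> ('v \<Rightarrow> nat \<Rightarrow> 'v \<Rightarrow> nat \<Rightarrow> 'v \<Rightarrow> nat \<Rightarrow> 'v) \<Rightarrow> nat
    \<Rightarrow> 'v \<Rightarrow> nat \<Rightarrow> 'v \<Rightarrow> nat \<Rightarrow> 'v \<Rightarrow> nat \<Rightarrow> 'v \<Rightarrow> nat \<Rightarrow> 'v \<Rightarrow> nat \<Rightarrow> 'v" where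
  "d3hom sc br \<delta> f e x1 d1 x2 d2 x3 d3 x4 d4 x5 d5 =
     sc (sg ((e + d1 + d2 + d3) * (d4 + d5)))
        (theta sc br x4 d4 x5 d5 (f x1 d1 x2 d2 x3 d3) (e + d1 + d2 + d3))
   - sc (\<delta> * sg ((e + d1 + d2) * (d3 + d5) + d4 * d5))
        (theta sc br x3 d3 x5 d5 (f x1 d1 x2 d2 x4 d4) (e + d1 + d2 + d4))
   - sc (\<delta> * sg (e * (d1 + d2))) (Dop sc br \<delta> x1 x2 (f x3 d3 x4 d4 x5 d5))
   + sc (sg ((e + d1 + d2) * (d3 + d4))) (Dop sc br \<delta> x3 x4 (f x1 d1 x2 d2 x5 d5))
   + f (br x1 x2 x3) (d1 + d2 + d3) x4 d4 x5 d5
   - f x1 d1 x2 d2 (br x3 x4 x5) (d3 + d4 + d5)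
   + sc (sg (d3 * (d1 + d2))) (f x3 d3 (br x1 x2 x4) (d1 + d2 + d4) x5 d5)
   + sc (\<delta> * sg ((d1 + d2) * (d3 + d4))) (f x3 d3 x4 d4 (br x1 x2 x5) (d1 + d2 + d5))"

text \<open>Z^3: cochains in C^3 whose coboundary (sum of the coboundaries of the even and odd
 components, extended linearly; determined by its values on homogeneous arguments) vanishes\<close>
definition Z3 :: "('k::field \<Rightarrow> 'v::ab_group_add \<Rightarrow> 'v) \<Rightarrow> 'v set \<Rightarrow> 'v set \<Rightarrow> 'k
    \<Rightarrow> ('v \<Rightarrow> 'v \<Rightarrow> 'v \<Rightarrow> 'v) \<Rightarrow> ('v \<Rightarrow> 'v \<Rightarrow> 'v \<Rightarrow> 'v) set" where
  "Z3 sc T0 T1 \<delta> br = {f. C3 sc T0 T1 \<delta> f \<and>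
     (\<forall>d1 d2 d3 d4 d5 x1 x2 x3 x4 x5. x1 \<in> hom T0 T1 d1 \<longrightarrow> x2 \<in> hom T0 T1 d2 \<longrightarrow>
        x3 \<in> hom T0 T1 d3 \<longrightarrow> x4 \<in> hom T0 T1 d4 \<longrightarrow> x5 \<in> hom T0 T1 d5 \<longrightarrow>
        d3hom sc br \<delta> (comp3 T0 T1 f 0) 0 x1 d1 x2 d2 x3 d3 x4 d4 x5 d5
      + d3hom sc br \<delta> (comp3 T0 T1 f 1) 1 x1 d1 x2 d2 x3 d3 x4 d4 x5 d5 = 0)}"

text \<open>B^3 = d^1 C^1: trilinear maps agreeing (on homogeneous arguments, hence everywhere)
 with d^1 g for some linear g\<close>
definition B3 :: "('k::field \<Rightarrow> 'v::ab_group_add \<Rightarrow> 'v) \<Rightarrow> 'v set \<Rightarrow> 'v set \<Rightarrow> 'k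
    \<Rightarrow> ('v \<Rightarrow> 'v \<Rightarrow> 'v \<Rightarrow> 'v) \<Rightarrow> ('v \<Rightarrow> 'v \<Rightarrow> 'v \<Rightarrow> 'v) set" where
  "B3 sc T0 T1 \<delta> br = {f. trilinear sc f \<and> (\<exists>g. Vector_Spaces.linear sc sc g \<and>
     (\<forall>d1 d2 d3 x1 x2 x3. x1 \<in> hom T0 T1 d1 \<longrightarrow> x2 \<in> hom T0 T1 d2 \<longrightarrow> x3 \<in> hom T0 T1 d3 \<longrightarrow>
        f x1 x2 x3 = d1hom sc br \<delta> (comp1 T0 T1 g 0) 0 x1 d1 x2 d2 x3 d3
                   + d1hom sc br \<delta> (comp1 T0 T1 g 1) 1 x1 d1 x2 d2 x3 d3))}"

definition H3_zero :: "('k::field \<Rightarrow> 'v::ab_group_add \<Rightarrow> 'v) \<Rightarrow> 'v set \<Rightarrow> 'v set \<Rightarrow> 'k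
    \<Rightarrow> ('v \<Rightarrow> 'v \<Rightarrow> 'v \<Rightarrow> 'v) \<Rightarrow> bool" where
  "H3_zero sc T0 T1 \<delta> br \<longleftrightarrow> Z3 sc T0 T1 \<delta> br \<subseteq> B3 sc T0 T1 \<delta> br"

definition ps_add :: "(nat \<Rightarrow> 'v::ab_group_add) \<Rightarrow> (nat \<Rightarrow> 'v) \<Rightarrow> nat \<Rightarrow> 'v" where
  "ps_add a b = (\<lambda>n. a n + b n)"

definition ps_scale :: "('k \<Rightarrow> 'v \<Rightarrow> 'v) \<Rightarrow> 'k \<Rightarrow> (nat \<Rightarrow> 'v) \<Rightarrow> nat \<Rightarrow> 'v" where
  "ps_scale sc s a = (\<lambda>n. sc s (a n))"

definition ps_hom :: "'v set \<Rightarrow> 'v set \<Rightarrow> nat \<Rightarrow> (nat \<Rightarrow> 'v) set" where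
  "ps_hom T0 T1 d = {a. \<forall>n. a n \<in> hom T0 T1 d}"

text \<open>K[[t]]-trilinear extension of f_t = sum f_i t^i to T[[t]]\<close>
definition ps_prod :: "(nat \<Rightarrow> 'v \<Rightarrow> 'v \<Rightarrow> 'v \<Rightarrow> 'v::ab_group_add)
    \<Rightarrow> (nat \<Rightarrow> 'v) \<Rightarrow> (nat \<Rightarrow> 'v) \<Rightarrow> (nat \<Rightarrow> 'v) \<Rightarrow> nat \<Rightarrow> 'v" where
  "ps_prod f a b c = (\<lambda>n. \<Sum>i\<le>n. \<Sum>j\<le>n - i. \<Sum>k\<le>n - i - j.
      f i (a j) (b k) (c (n - i - j - k)))"

text \<open>K[[t]]-linear extension of phi_t = sum phi_i t^i to T[[t]]\<close>
definition ps_app :: "(nat \<Rightarrow> 'v \<Rightarrow> 'v::ab_group_add) \<Rightarrow> (nat \<Rightarrow> 'v) \<Rightarrow> nat \<Rightarrow> 'v" where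
  "ps_app \<phi> a = (\<lambda>n. \<Sum>i\<le>n. \<phi> i (a (n - i)))"

definition deformation :: "('k::field \<Rightarrow> 'v::ab_group_add \<Rightarrow> 'v) \<Rightarrow> 'v set \<Rightarrow> 'v set \<Rightarrow> 'k
    \<Rightarrow> ('v \<Rightarrow> 'v \<Rightarrow> 'v \<Rightarrow> 'v) \<Rightarrow> (nat \<Rightarrow> 'v \<Rightarrow> 'v \<Rightarrow> 'v \<Rightarrow> 'v) \<Rightarrow> bool" where
  "deformation sc T0 T1 \<delta> br f \<longleftrightarrow> (\<forall>i. trilinear sc (f i)) \<and> f 0 = br \<and>
     jlsts_ax ps_add (\<lambda>n. 0) (ps_scale sc) (ps_hom T0 T1) \<delta> (ps_prod f)"

definition null_deformation :: "('v \<Rightarrow> 'v \<Rightarrow> 'v \<Rightarrow> 'v::zero) \<Rightarrow> nat \<Rightarrow> 'v \<Rightarrow> 'v \<Rightarrow> 'v \<Rightarrow> 'v" where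
  "null_deformation br = (\<lambda>i. if i = 0 then br else (\<lambda>x y z. 0))"

definition equivalent_deformations :: "('k::field \<Rightarrow> 'v::ab_group_add \<Rightarrow> 'v)
    \<Rightarrow> (nat \<Rightarrow> 'v \<Rightarrow> 'v \<Rightarrow> 'v \<Rightarrow> 'v) \<Rightarrow> (nat \<Rightarrow> 'v \<Rightarrow> 'v \<Rightarrow> 'v \<Rightarrow> 'v) \<Rightarrow> bool" where
  "equivalent_deformations sc f f' \<longleftrightarrow> (\<exists>\<phi>. \<phi> 0 = id \<and> (\<forall>i. Vector_Spaces.linear sc sc (\<phi> i)) \<and>
     (\<forall>a b c. ps_app \<phi> (ps_prod f a b c) = ps_prod f' (ps_app \<phi> a) (ps_app \<phi> b) (ps_app \<phi> c)))"

end

theory Submission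
  imports Defs "HOL-Library.Function_Algebras"
begin

text \<open>Write \<open>f\<^sub>t\<close> and the sought equivalence
 \<open>\<phi>\<^sub>t = id + \<phi>\<^sub>1 t + \<phi>\<^sub>2 t\<^sup>2 + \<dots>\<close> as power series and construct \<open>\<phi>\<^sub>t\<close>
 one coefficient at a time.  Suppose \<open>\<phi>\<^sub>1, \<dots>, \<phi>\<^sub>N\<^sub>-\<^sub>1\<close> are even and make
 \<open>\<phi>\<^sub>t \<circ> f\<^sub>t\<close> and \<open>f\<^sub>0 \<circ> (\<phi>\<^sub>t \<times> \<phi>\<^sub>t \<times> \<phi>\<^sub>t)\<close> agree below order \<open>N\<close>.
 Conjugating \<open>f\<^sub>t\<close> by \<open>\<phi>\<^sub>t\<close> gives a deformation whose terms of order
 \<open>1, \<dots>, N - 1\<close> vanish, and the order-\<open>N\<close> part of (A1)--(A4) for it says that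
 its order-\<open>N\<close> term \<open>F\<close> is an even 3-cocycle.  Since \<open>H\<^sup>3 = 0\<close>,
 \<open>F = d\<^sup>1g\<close> for some even \<open>g\<close>, and \<open>\<phi>\<^sub>N := g\<close> removes the discrepancy in
 order \<open>N\<close> without touching the lower orders.  The limit \<open>\<phi>\<^sub>t\<close> is an
 equivalence with the null deformation in every order.\<close>

lemma sg_0 [simp]: "sg 0 = 1"
  by (simp add: sg_def)

lemma sg_add: "sg (m + n) = (sg m * sg n :: 'k::field)"
  by (simp add: sg_def power_add)

lemma sg_mult_self [simp]: "sg n * sg n = (1::'k::field)"
  by (simp add: sg_def flip: power_add)

lemma sg_parity_cong: "even m = even n \<Longrightarrow> sg m = (sg n :: 'k::field)"
  by (simp add: sg_def minus_one_power_iff)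

lemma trilinear_linear:
  assumes "trilinear sc f"
  shows "Vector_Spaces.linear sc sc (\<lambda>x. f x y z)" "Vector_Spaces.linear sc sc (\<lambda>y. f x y z)"
    "Vector_Spaces.linear sc sc (\<lambda>z. f x y z)"
  using assms by (simp_all add: trilinear_def)

lemma trilinear_add:
  assumes "trilinear sc f"
  shows "f (x + x') y z = f x y z + f x' y z" "f x (y + y') z = f x y z + f x y' z"
    "f x y (z + z') = f x y z + f x y z'"
  using trilinear_linear[OF assms] by (simp_all add: Vector_Spaces.linear_iff)

lemma trilinear_scale:
  assumes "trilinear sc f"
  shows "f (sc s x) y z = sc s (f x y z)" "f x (sc s y) z = sc s (f x y z)"
    "f x y (sc s z) = sc s (f x y z)"
  using trilinear_linear[OF assms] by (simp_all add: Vector_Spaces.linear_iff)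

lemma trilinear_zero:
  assumes "trilinear sc f"
  shows "f 0 y z = 0" "f x 0 z = 0" "f x y 0 = 0"
  using trilinear_add(1)[OF assms, of 0 0 y z] trilinear_add(2)[OF assms, of x 0 0 z]
    trilinear_add(3)[OF assms, of x y 0 0]
  by simp_all

lemma trilinearI:
  assumes "vector_space sc"
    and "\<And>x x' y z. f (x + x') y z = f x y z + f x' y z" "\<And>x y y' z. f x (y + y') z = f x y z + f x y' z"
    "\<And>x y z z'. f x y (z + z') = f x y z + f x y z'"
    and "\<And>s x y z. f (sc s x) y z = sc s (f x y z)" "\<And>s x y z. f x (sc s y) z = sc s (f x y z)"
    "\<And>s x y z. f x y (sc s z) = sc s (f x y z)"
  shows "trilinear sc f"
  using assms by (simp add: trilinear_def Vector_Spaces.linear_iff)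

lemma jlsts_ax_hom:
  "jlsts_ax ad z sc H \<delta> P \<Longrightarrow> a \<in> H da \<Longrightarrow> b \<in> H db \<Longrightarrow> c \<in> H dc \<Longrightarrow> P a b c \<in> H (da + db + dc)"
  unfolding jlsts_ax_def by blast

lemma jlsts_ax_swap:
  "jlsts_ax ad z sc H \<delta> P \<Longrightarrow> a \<in> H da \<Longrightarrow> b \<in> H db \<Longrightarrow> c \<in> H dc \<Longrightarrow>
    P b a c = sc (- \<delta> * sg (da * db)) (P a b c)"
  unfolding jlsts_ax_def by blast

lemma jlsts_ax_cyclic:
  "jlsts_ax ad z sc H \<delta> P \<Longrightarrow> a \<in> H da \<Longrightarrow> b \<in> H db \<Longrightarrow> c \<in> H dc \<Longrightarrow>
    ad (ad (sc (sg (da * dc)) (P a b c)) (sc (sg (db * da)) (P b c a))) (sc (sg (dc * db)) (P c a b)) = z"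
  unfolding jlsts_ax_def by blast

lemma jlsts_ax_derivation:
  "jlsts_ax ad z sc H \<delta> P \<Longrightarrow> a \<in> H da \<Longrightarrow> b \<in> H db \<Longrightarrow> c \<in> H dc \<Longrightarrow> d \<in> H dd \<Longrightarrow> e \<in> H de \<Longrightarrow>
    P a b (P c d e) = ad (ad (P (P a b c) d e) (sc (sg (dc * (da + db))) (P c (P a b d) e)))
      (sc (\<delta> * sg ((da + db) * (dc + dd))) (P c d (P a b e)))"
  unfolding jlsts_ax_def by blast

lemma jlsts_ax_transport:
  assumes P: "jlsts_ax ad z sc H \<delta> P"
    and M_add: "\<And>x y. M (ad x y) = ad (M x) (M y)" and M_scale: "\<And>s x. M (sc s x) = sc s (M x)"
    and M_zero: "M z = z" and left_inverse: "\<And>x. N (M x) = x"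
    and M_hom: "\<And>x d. x \<in> H d \<Longrightarrow> M x \<in> H d" and N_hom: "\<And>x d. x \<in> H d \<Longrightarrow> N x \<in> H d"
  shows "jlsts_ax ad z sc H \<delta> (\<lambda>a b c. M (P (N a) (N b) (N c)))"
  unfolding jlsts_ax_def
proof (intro conjI allI impI)
  fix da db dc a b c
  assume "a \<in> H da" "b \<in> H db" "c \<in> H dc"
  then have hyps: "N a \<in> H da" "N b \<in> H db" "N c \<in> H dc"
    by (simp_all add: N_hom)
  show "M (P (N a) (N b) (N c)) \<in> H (da + db + dc)"
    by (intro M_hom jlsts_ax_hom[OF P hyps])
  show "M (P (N b) (N a) (N c)) = sc (- \<delta> * sg (da * db)) (M (P (N a) (N b) (N c)))"
    unfolding jlsts_ax_swap[OF P hyps] by (rule M_scale)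
  show "ad (ad (sc (sg (da * dc)) (M (P (N a) (N b) (N c)))) (sc (sg (db * da)) (M (P (N b) (N c) (N a)))))
      (sc (sg (dc * db)) (M (P (N c) (N a) (N b)))) = z"
    using arg_cong[OF jlsts_ax_cyclic[OF P hyps], of M] by (simp add: M_add M_scale M_zero)
next
  fix da db dc dd de a b c d e
  assume "a \<in> H da" "b \<in> H db" "c \<in> H dc" "d \<in> H dd" "e \<in> H de"
  then have "N a \<in> H da" "N b \<in> H db" "N c \<in> H dc" "N d \<in> H dd" "N e \<in> H de"
    by (simp_all add: N_hom)
  note derivation = jlsts_ax_derivation[OF P this]
  show "M (P (N a) (N b) (N (M (P (N c) (N d) (N e))))) =
      ad (ad (M (P (N (M (P (N a) (N b) (N c)))) (N d) (N e)))
          (sc (sg (dc * (da + db))) (M (P (N c) (N (M (P (N a) (N b) (N d)))) (N e)))))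
        (sc (\<delta> * sg ((da + db) * (dc + dd))) (M (P (N c) (N d) (N (M (P (N a) (N b) (N e)))))))"
    unfolding left_inverse derivation by (simp only: M_add M_scale)
qed

section \<open>Formal power series\<close>

definition ps_const :: "'v::zero \<Rightarrow> nat \<Rightarrow> 'v" where
  "ps_const x = (\<lambda>n. if n = 0 then x else 0)"

definition ps_shift :: "(nat \<Rightarrow> 'v::zero) \<Rightarrow> nat \<Rightarrow> 'v" where
  "ps_shift a = (\<lambda>n. case n of 0 \<Rightarrow> 0 | Suc m \<Rightarrow> a m)"

definition ps_tail :: "(nat \<Rightarrow> 'v) \<Rightarrow> nat \<Rightarrow> 'v" where
  "ps_tail a = (\<lambda>n. a (Suc n))"

definition ps_monom :: "nat \<Rightarrow> 'v::zero \<Rightarrow> nat \<Rightarrow> 'v" where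
  "ps_monom n x = (\<lambda>m. if m = n then x else 0)"

lemma ps_const_0 [simp]: "ps_const x 0 = x"
  by (simp add: ps_const_def)

lemma ps_const_add: "ps_const (x + y) = ps_const x + ps_const y"
  for x y :: "'v::monoid_add"
  by (simp add: fun_eq_iff ps_const_def)

lemma ps_const_plus_shift_tail: "ps_const (a 0) + ps_shift (ps_tail a) = a"
  for a :: "nat \<Rightarrow> 'v::monoid_add"
  by (auto simp: fun_eq_iff ps_const_def ps_shift_def ps_tail_def split: nat.split)

lemma ps_scale_apply [simp]: "ps_scale sc s a n = sc s (a n)"
  by (simp add: ps_scale_def)

lemma ps_add_eq_plus: "ps_add a b = a + b"
  by (simp add: ps_add_def fun_eq_iff)

text \<open>\<open>K[[t]]\<close>-linearity: \<open>K\<close>-linear and commuting with multiplication by \<open>t\<close>, which is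
 \<open>ps_shift\<close>.\<close>
definition ps_linear :: "('k \<Rightarrow> 'v::ab_group_add \<Rightarrow> 'v) \<Rightarrow> ((nat \<Rightarrow> 'v) \<Rightarrow> nat \<Rightarrow> 'v) \<Rightarrow> bool" where
  "ps_linear sc M \<longleftrightarrow> (\<forall>a b. M (a + b) = M a + M b) \<and> (\<forall>s a. M (ps_scale sc s a) = ps_scale sc s (M a))
     \<and> (\<forall>a. M (ps_shift a) = ps_shift (M a))"

definition ps_trilinear :: "('k \<Rightarrow> 'v::ab_group_add \<Rightarrow> 'v)
    \<Rightarrow> ((nat \<Rightarrow> 'v) \<Rightarrow> (nat \<Rightarrow> 'v) \<Rightarrow> (nat \<Rightarrow> 'v) \<Rightarrow> nat \<Rightarrow> 'v) \<Rightarrow> bool" where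
  "ps_trilinear sc M \<longleftrightarrow> (\<forall>b c. ps_linear sc (\<lambda>a. M a b c)) \<and> (\<forall>a c. ps_linear sc (\<lambda>b. M a b c))
     \<and> (\<forall>a b. ps_linear sc (\<lambda>c. M a b c))"

lemma ps_linear_add: "ps_linear sc M \<Longrightarrow> M (a + b) = M a + M b"
  and ps_linear_scale: "ps_linear sc M \<Longrightarrow> M (ps_scale sc s a) = ps_scale sc s (M a)"
  and ps_linear_shift: "ps_linear sc M \<Longrightarrow> M (ps_shift a) = ps_shift (M a)"
  by (simp_all add: ps_linear_def)

lemma ps_linear_zero: "ps_linear sc M \<Longrightarrow> M 0 = 0"
  using ps_linear_add[of sc M 0 0] by simp

lemma ps_trilinear_linear:
  assumes "ps_trilinear sc M"
  shows "ps_linear sc (\<lambda>a. M a b c)" "ps_linear sc (\<lambda>b. M a b c)" "ps_linear sc (\<lambda>c. M a b c)"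
  using assms by (simp_all add: ps_trilinear_def)

lemma ps_linear_decomp:
  assumes "ps_linear sc M"
  shows "M a = M (ps_const (a 0)) + ps_shift (M (ps_tail a))"
  by (simp add: ps_linear_add[OF assms, symmetric] ps_linear_shift[OF assms, symmetric]
      ps_const_plus_shift_tail)

lemma ps_linear_coeff_eq_0:
  assumes "ps_linear sc M" and const: "\<And>x m. m < n \<Longrightarrow> M (ps_const x) m = 0" and "m < n"
  shows "M a m = 0"
  using const \<open>m < n\<close>
proof (induction n arbitrary: a m)
  case (Suc n)
  have "ps_shift (M (ps_tail a)) m = 0"
    using Suc by (simp add: ps_shift_def split: nat.split)
  then show ?case
    using Suc.prems fun_cong[OF ps_linear_decomp[OF assms(1), of a], of m] by simp
qed simp

lemma ps_linear_coeff_eq_const: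
  assumes "ps_linear sc M" and "\<And>x m. m < n \<Longrightarrow> M (ps_const x) m = 0"
  shows "M a n = M (ps_const (a 0)) n"
proof -
  have "ps_shift (M (ps_tail a)) n = 0"
    using ps_linear_coeff_eq_0[OF assms] by (simp add: ps_shift_def split: nat.split)
  then show ?thesis
    using fun_cong[OF ps_linear_decomp[OF assms(1), of a], of n] by simp
qed

lemma ps_trilinear_const_add:
  assumes "ps_trilinear sc M"
  shows "M (ps_const (x + x')) b c = M (ps_const x) b c + M (ps_const x') b c"
    and "M a (ps_const (y + y')) c = M a (ps_const y) c + M a (ps_const y') c"
    and "M a b (ps_const (z + z')) = M a b (ps_const z) + M a b (ps_const z')"
  using ps_linear_add[OF ps_trilinear_linear(1)[OF assms]] ps_linear_add[OF ps_trilinear_linear(2)[OF assms]]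
    ps_linear_add[OF ps_trilinear_linear(3)[OF assms]]
  by (simp_all add: ps_const_add)

lemma ps_trilinear_coeff_eq_0:
  assumes M: "ps_trilinear sc M"
    and const: "\<And>x y z m. m < n \<Longrightarrow> M (ps_const x) (ps_const y) (ps_const z) m = 0" and "m < n"
  shows "M a b c m = 0"
proof -
  have "M (ps_const x) (ps_const y) c m = 0" if "m < n" for x y c m
    using ps_linear_coeff_eq_0[OF ps_trilinear_linear(3)[OF M]] const that by blast
  then have "M (ps_const x) b c m = 0" if "m < n" for x b c m
    using ps_linear_coeff_eq_0[OF ps_trilinear_linear(2)[OF M]] that by blast
  then show ?thesis
    using ps_linear_coeff_eq_0[OF ps_trilinear_linear(1)[OF M]] \<open>m < n\<close> by blast
qed

lemma ps_trilinear_coeff_eq_const: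
  assumes M: "ps_trilinear sc M"
    and const: "\<And>x y z m. m < n \<Longrightarrow> M (ps_const x) (ps_const y) (ps_const z) m = 0"
  shows "M a b c n = M (ps_const (a 0)) (ps_const (b 0)) (ps_const (c 0)) n"
proof -
  note low = ps_trilinear_coeff_eq_0[OF M const]
  have "M a b c n = M (ps_const (a 0)) b c n"
    using ps_linear_coeff_eq_const[OF ps_trilinear_linear(1)[OF M]] low by blast
  also have "\<dots> = M (ps_const (a 0)) (ps_const (b 0)) c n"
    using ps_linear_coeff_eq_const[OF ps_trilinear_linear(2)[OF M]] low by blast
  also have "\<dots> = M (ps_const (a 0)) (ps_const (b 0)) (ps_const (c 0)) n"
    using ps_linear_coeff_eq_const[OF ps_trilinear_linear(3)[OF M]] low by blast
  finally show ?thesis .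
qed

lemma ps_trilinear_eq_0I:
  assumes "ps_trilinear sc M" and "\<And>x y z. M (ps_const x) (ps_const y) (ps_const z) = 0"
  shows "M a b c = 0"
proof
  fix n
  show "M a b c n = 0 n"
    using ps_trilinear_coeff_eq_0[OF assms(1), of "Suc n"] assms(2) by simp
qed

lemma ps_linear_compose: "ps_linear sc M \<Longrightarrow> ps_linear sc N \<Longrightarrow> ps_linear sc (\<lambda>a. M (N a))"
  by (simp add: ps_linear_def)

lemma ps_linear_inverse:
  assumes M: "ps_linear sc M" and left: "\<And>a. N (M a) = a" and right: "\<And>u. M (N u) = u"
  shows "ps_linear sc N"
  using M unfolding ps_linear_def by (metis left right)

lemma ps_trilinear_compose_left:
  "ps_trilinear sc P \<Longrightarrow> ps_linear sc \<Phi> \<Longrightarrow> ps_trilinear sc (\<lambda>a b c. \<Phi> (P a b c))"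
  unfolding ps_trilinear_def by (auto intro: ps_linear_compose[of sc \<Phi>])

lemma ps_trilinear_compose_right:
  "ps_trilinear sc P \<Longrightarrow> ps_linear sc \<Phi> \<Longrightarrow> ps_trilinear sc (\<lambda>a b c. P (\<Phi> a) (\<Phi> b) (\<Phi> c))"
  unfolding ps_trilinear_def by (auto intro: ps_linear_compose[of sc _ \<Phi>])

context vector_space
begin

lemma ps_linear_diff_fun:
  "ps_linear scale M \<Longrightarrow> ps_linear scale N \<Longrightarrow> ps_linear scale (\<lambda>a. M a - N a)"
  by (simp add: ps_linear_def ps_scale_def ps_shift_def fun_eq_iff scale_right_diff_distrib
      split: nat.split)

lemma ps_trilinear_diff:
  "ps_trilinear scale P \<Longrightarrow> ps_trilinear scale P' \<Longrightarrow> ps_trilinear scale (\<lambda>a b c. P a b c - P' a b c)"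
  unfolding ps_trilinear_def by (auto intro: ps_linear_diff_fun)

lemma ps_trilinear_eqI:
  assumes "ps_trilinear scale M" "ps_trilinear scale M'"
    and "\<And>x y z. M (ps_const x) (ps_const y) (ps_const z) = M' (ps_const x) (ps_const y) (ps_const z)"
  shows "M = M'"
  using ps_trilinear_eq_0I[OF ps_trilinear_diff[OF assms(1,2)]] assms(3) by (simp add: fun_eq_iff)

lemma ps_linear_ps_app:
  assumes "\<And>i. Vector_Spaces.linear scale scale (\<phi> i)"
  shows "ps_linear scale (ps_app \<phi>)"
proof -
  note \<phi> = module_hom.add[OF module_hom_linearI[OF assms]] module_hom.scale[OF module_hom_linearI[OF assms]]
    module_hom.zero[OF module_hom_linearI[OF assms]]
  show ?thesis
    unfolding ps_linear_def
    by (auto simp: fun_eq_iff ps_app_def ps_scale_def ps_shift_def \<phi> sum.distrib scale_sum_right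
        Suc_diff_le split: nat.split)
qed

lemma ps_app_const:
  assumes "\<And>i. Vector_Spaces.linear scale scale (\<phi> i)"
  shows "ps_app \<phi> (ps_const x) n = \<phi> n x"
proof -
  have "ps_app \<phi> (ps_const x) n = (\<Sum>i\<in>{n}. \<phi> i (ps_const x (n - i)))"
    unfolding ps_app_def
    by (rule sum.mono_neutral_right) (auto simp: ps_const_def module_hom.zero[OF module_hom_linearI[OF assms]])
  then show ?thesis
    by (simp add: ps_const_def)
qed

end

lemma ps_app_0: "\<phi> 0 = id \<Longrightarrow> ps_app \<phi> a 0 = a 0"
  by (simp add: ps_app_def)

lemma ps_app_causal: "(\<And>i. i \<le> n \<Longrightarrow> \<phi> i = \<phi>' i) \<Longrightarrow> ps_app \<phi> a n = ps_app \<phi>' a n"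
  by (simp add: ps_app_def)

lemma ps_app_update:
  assumes "\<psi> n = (\<lambda>x. 0)"
  shows "ps_app (\<psi>(n := g)) a n = ps_app \<psi> a n + g (a 0)"
  using assms by (simp add: ps_app_def atMost_Suc_eq_insert_0 lessThan_Suc_atMost[symmetric])

fun ps_inv :: "(nat \<Rightarrow> 'v \<Rightarrow> 'v::ab_group_add) \<Rightarrow> (nat \<Rightarrow> 'v) \<Rightarrow> nat \<Rightarrow> 'v" where
  "ps_inv \<phi> u n = u n - (\<Sum>i\<in>{1..n}. \<phi> i (ps_inv \<phi> u (n - i)))"

declare ps_inv.simps [simp del]

lemma ps_app_eq_plus_higher: "\<phi> 0 = id \<Longrightarrow> ps_app \<phi> a n = a n + (\<Sum>i\<in>{1..n}. \<phi> i (a (n - i)))"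
  by (simp add: ps_app_def atMost_atLeast0 sum.atLeast_Suc_atMost)

lemma ps_inv_0: "ps_inv \<phi> u 0 = u 0"
  by (subst ps_inv.simps) simp

lemma ps_app_ps_inv:
  assumes "\<phi> 0 = id"
  shows "ps_app \<phi> (ps_inv \<phi> u) = u"
proof
  fix n
  show "ps_app \<phi> (ps_inv \<phi> u) n = u n"
    using ps_inv.simps[of \<phi> u n] by (simp add: ps_app_eq_plus_higher[of \<phi>, OF assms])
qed

lemma ps_inv_ps_app:
  assumes "\<phi> 0 = id"
  shows "ps_inv \<phi> (ps_app \<phi> a) = a"
proof
  fix n
  show "ps_inv \<phi> (ps_app \<phi> a) n = a n"
  proof (induction n rule: less_induct)
    case (less n)
    then have "(\<Sum>i\<in>{1..n}. \<phi> i (ps_inv \<phi> (ps_app \<phi> a) (n - i))) = (\<Sum>i\<in>{1..n}. \<phi> i (a (n - i)))"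
      by (intro sum.cong) auto
    then show ?case
      by (subst ps_inv.simps) (simp add: ps_app_eq_plus_higher[of \<phi>, OF assms])
  qed
qed

definition ps_conj :: "(nat \<Rightarrow> 'v \<Rightarrow> 'v::ab_group_add)
    \<Rightarrow> ((nat \<Rightarrow> 'v) \<Rightarrow> (nat \<Rightarrow> 'v) \<Rightarrow> (nat \<Rightarrow> 'v) \<Rightarrow> nat \<Rightarrow> 'v)
    \<Rightarrow> (nat \<Rightarrow> 'v) \<Rightarrow> (nat \<Rightarrow> 'v) \<Rightarrow> (nat \<Rightarrow> 'v) \<Rightarrow> nat \<Rightarrow> 'v" where
  "ps_conj \<phi> P a b c = ps_app \<phi> (P (ps_inv \<phi> a) (ps_inv \<phi> b) (ps_inv \<phi> c))"

lemma sum_atMost_gap: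
  fixes n :: nat
  assumes "0 < n" and "\<And>i. 0 < i \<Longrightarrow> i < n \<Longrightarrow> h i = 0"
  shows "(\<Sum>i\<le>n. h i) = h 0 + (h n :: 'a::comm_monoid_add)"
proof -
  have "(\<Sum>i\<le>n. h i) = (\<Sum>i\<in>{0, n}. h i)"
    using assms(2) by (intro sum.mono_neutral_right) auto
  then show ?thesis
    using assms(1) by simp
qed

definition simplex4 :: "nat \<Rightarrow> (nat \<times> nat \<times> nat \<times> nat) set" where
  "simplex4 n = {(i, j, k, l). i + j + k + l = n}"

lemma finite_simplex4: "finite (simplex4 n)"
proof (rule finite_subset)
  show "simplex4 n \<subseteq> {..n} \<times> {..n} \<times> {..n} \<times> {..n}"
    by (auto simp: simplex4_def)
qed simp

lemma mem_simplex4 [simp]: "(i, j, k, l) \<in> simplex4 n \<longleftrightarrow> i + j + k + l = n"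
  by (simp add: simplex4_def)

lemma finite_simplex4_Collect [simp]: "finite {(i, j, k, l). i + j + k + l = (n::nat) \<and> P i j k l}"
  by (rule finite_subset[OF _ finite_simplex4[of n]]) (auto simp: simplex4_def)

lemma ps_prod_simplex:
  "ps_prod f a b c n = (\<Sum>(i, j, k, l)\<in>simplex4 n. f i (a j) (b k) (c l))"
proof -
  let ?S = "SIGMA i:{..n}. SIGMA j:{..n - i}. {..n - i - j}"
  have "ps_prod f a b c n = (\<Sum>(i, j, k)\<in>?S. f i (a j) (b k) (c (n - i - j - k)))"
    unfolding ps_prod_def by (simp add: sum.Sigma split_def)
  also have "\<dots> = (\<Sum>(i, j, k, l)\<in>simplex4 n. f i (a j) (b k) (c l))"
    by (rule sum.reindex_bij_witness[where i="\<lambda>(i, j, k, l). (i, j, k)"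
          and j="\<lambda>(i, j, k). (i, j, k, n - i - j - k)"]) (auto simp: simplex4_def)
  finally show ?thesis .
qed

lemma ps_prod_0: "ps_prod f a b c 0 = f 0 (a 0) (b 0) (c 0)"
  by (simp add: ps_prod_def)

lemma ps_prod_causal:
  assumes "\<And>j. j \<le> n \<Longrightarrow> a j = a' j" "\<And>j. j \<le> n \<Longrightarrow> b j = b' j" "\<And>j. j \<le> n \<Longrightarrow> c j = c' j"
  shows "ps_prod f a b c n = ps_prod f a' b' c' n"
  unfolding ps_prod_simplex using assms by (intro sum.cong) (auto simp: simplex4_def)

context vector_space
begin

lemma ps_prod_shift:
  assumes "\<And>i. trilinear scale (f i)"
  shows "ps_prod f (ps_shift a) b c = ps_shift (ps_prod f a b c)"
    and "ps_prod f a (ps_shift b) c = ps_shift (ps_prod f a b c)"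
    and "ps_prod f a b (ps_shift c) = ps_shift (ps_prod f a b c)"
proof -
  note zero = trilinear_zero[OF assms]
  have "ps_prod f a b c m = ps_prod f (ps_shift a) b c (Suc m)" for m
    unfolding ps_prod_simplex
    by (rule sum.reindex_bij_witness_not_neutral[where S'="{}"
          and T'="{(i, j, k, l)\<in>simplex4 (Suc m). j = 0}"
          and j="\<lambda>(i, j, k, l). (i, Suc j, k, l)" and i="\<lambda>(i, j, k, l). (i, j - 1, k, l)"])
      (auto simp: ps_shift_def zero)
  moreover have "ps_prod f a b c m = ps_prod f a (ps_shift b) c (Suc m)" for m
    unfolding ps_prod_simplex
    by (rule sum.reindex_bij_witness_not_neutral[where S'="{}"
          and T'="{(i, j, k, l)\<in>simplex4 (Suc m). k = 0}"
          and j="\<lambda>(i, j, k, l). (i, j, Suc k, l)" and i="\<lambda>(i, j, k, l). (i, j, k - 1, l)"])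
      (auto simp: ps_shift_def zero)
  moreover have "ps_prod f a b c m = ps_prod f a b (ps_shift c) (Suc m)" for m
    unfolding ps_prod_simplex
    by (rule sum.reindex_bij_witness_not_neutral[where S'="{}"
          and T'="{(i, j, k, l)\<in>simplex4 (Suc m). l = 0}"
          and j="\<lambda>(i, j, k, l). (i, j, k, Suc l)" and i="\<lambda>(i, j, k, l). (i, j, k, l - 1)"])
      (auto simp: ps_shift_def zero)
  ultimately show "ps_prod f (ps_shift a) b c = ps_shift (ps_prod f a b c)"
    and "ps_prod f a (ps_shift b) c = ps_shift (ps_prod f a b c)"
    and "ps_prod f a b (ps_shift c) = ps_shift (ps_prod f a b c)"
    by (auto simp: fun_eq_iff ps_shift_def ps_prod_0 zero split: nat.split)
qed

lemma ps_trilinear_ps_prod: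
  assumes f: "\<And>i. trilinear scale (f i)"
  shows "ps_trilinear scale (ps_prod f)"
  unfolding ps_trilinear_def ps_linear_def ps_prod_shift[OF f]
  by (simp add: fun_eq_iff ps_prod_def trilinear_add[OF f] trilinear_scale[OF f] sum.distrib
      scale_sum_right)

lemma ps_prod_const:
  assumes "\<And>i. trilinear scale (f i)"
  shows "ps_prod f (ps_const x) (ps_const y) (ps_const z) n = f n x y z"
proof -
  have "ps_prod f (ps_const x) (ps_const y) (ps_const z) n
      = (\<Sum>(i, j, k, l)\<in>{(n, 0, 0, 0)}. f i (ps_const x j) (ps_const y k) (ps_const z l))"
    unfolding ps_prod_simplex
    by (rule sum.mono_neutral_right) (auto simp: finite_simplex4 ps_const_def trilinear_zero[OF assms] split: if_split_asm)
  then show ?thesis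
    by (simp add: ps_const_def)
qed

lemma ps_prod_const_const:
  assumes "\<And>i. trilinear scale (f i)"
  shows "ps_prod f (ps_const x) (ps_const y) c n = (\<Sum>i\<le>n. f i x y (c (n - i)))"
    and "ps_prod f (ps_const x) b (ps_const z) n = (\<Sum>i\<le>n. f i x (b (n - i)) z)"
    and "ps_prod f a (ps_const y) (ps_const z) n = (\<Sum>i\<le>n. f i (a (n - i)) y z)"
proof -
  note zero = trilinear_zero[OF assms]
  show "ps_prod f (ps_const x) (ps_const y) c n = (\<Sum>i\<le>n. f i x y (c (n - i)))"
    unfolding ps_prod_simplex
    by (rule sym, rule sum.reindex_bij_witness_not_neutral[where S'="{}"
          and T'="{(i, j, k, l)\<in>simplex4 n. j \<noteq> 0 \<or> k \<noteq> 0}"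
          and j="\<lambda>i. (i, 0, 0, n - i)" and i="\<lambda>(i, j, k, l). i"])
      (auto simp: ps_const_def zero)
  show "ps_prod f (ps_const x) b (ps_const z) n = (\<Sum>i\<le>n. f i x (b (n - i)) z)"
    unfolding ps_prod_simplex
    by (rule sym, rule sum.reindex_bij_witness_not_neutral[where S'="{}"
          and T'="{(i, j, k, l)\<in>simplex4 n. j \<noteq> 0 \<or> l \<noteq> 0}"
          and j="\<lambda>i. (i, 0, n - i, 0)" and i="\<lambda>(i, j, k, l). i"])
      (auto simp: ps_const_def zero)
  show "ps_prod f a (ps_const y) (ps_const z) n = (\<Sum>i\<le>n. f i (a (n - i)) y z)"
    unfolding ps_prod_simplex
    by (rule sym, rule sum.reindex_bij_witness_not_neutral[where S'="{}"
          and T'="{(i, j, k, l)\<in>simplex4 n. k \<noteq> 0 \<or> l \<noteq> 0}"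
          and j="\<lambda>i. (i, n - i, 0, 0)" and i="\<lambda>(i, j, k, l). i"])
      (auto simp: ps_const_def zero)
qed

lemma ps_prod_const_const_gap:
  assumes q: "\<And>i. trilinear scale (q i)" and "0 < n" and gap: "\<And>i. 0 < i \<Longrightarrow> i < n \<Longrightarrow> q i = (\<lambda>x y z. 0)"
  shows "ps_prod q (ps_const x) (ps_const y) c n = q 0 x y (c n) + q n x y (c 0)"
    and "ps_prod q (ps_const x) b (ps_const z) n = q 0 x (b n) z + q n x (b 0) z"
    and "ps_prod q a (ps_const y) (ps_const z) n = q 0 (a n) y z + q n (a 0) y z"
  unfolding ps_prod_const_const[OF q] using \<open>0 < n\<close>
  by (simp_all add: sum_atMost_gap gap)

definition ps_coeffs :: "((nat \<Rightarrow> 'v) \<Rightarrow> (nat \<Rightarrow> 'v) \<Rightarrow> (nat \<Rightarrow> 'v) \<Rightarrow> nat \<Rightarrow> 'v::zero)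
    \<Rightarrow> nat \<Rightarrow> 'v \<Rightarrow> 'v \<Rightarrow> 'v \<Rightarrow> 'v" where
  "ps_coeffs M i x y z = M (ps_const x) (ps_const y) (ps_const z) i"

lemma trilinear_ps_coeffs:
  assumes "ps_trilinear scale M"
  shows "trilinear scale (ps_coeffs M i)"
proof -
  note lin = ps_trilinear_linear[OF assms]
  have const: "ps_const (x + y) = ps_const x + ps_const y" "ps_const (scale s x) = ps_scale scale s (ps_const x)"
    for x y :: 'b and s
    by (simp_all add: ps_const_add fun_eq_iff ps_const_def)
  show ?thesis
    unfolding ps_coeffs_def
    by (intro trilinearI vector_space_axioms)
      (simp_all add: const ps_linear_add[OF lin(1)] ps_linear_add[OF lin(2)] ps_linear_add[OF lin(3)]
        ps_linear_scale[OF lin(1)] ps_linear_scale[OF lin(2)] ps_linear_scale[OF lin(3)])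
qed

lemma ps_prod_ps_coeffs:
  assumes "ps_trilinear scale M"
  shows "ps_prod (ps_coeffs M) = M"
  by (rule ps_trilinear_eqI[OF ps_trilinear_ps_prod[OF trilinear_ps_coeffs[OF assms]] assms])
    (simp add: fun_eq_iff ps_prod_const[OF trilinear_ps_coeffs[OF assms]] ps_coeffs_def)

lemma trilinear_null_deformation: "trilinear scale br \<Longrightarrow> trilinear scale (null_deformation br i)"
  by (simp add: null_deformation_def trilinear_def Vector_Spaces.linear_iff vector_space_axioms)

lemma ps_prod_null_deformation_monomial:
  assumes br: "trilinear scale br"
  shows "ps_prod (null_deformation br) (ps_monom n x) b c n = br x (b 0) (c 0)"
    and "ps_prod (null_deformation br) a (ps_monom n x) c n = br (a 0) x (c 0)"
    and "ps_prod (null_deformation br) a b (ps_monom n x) n = br (a 0) (b 0) x"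
proof -
  note zero = trilinear_zero[OF br]
  have "ps_prod (null_deformation br) (ps_monom n x) b c n
      = (\<Sum>(i, j, k, l)\<in>{(0, n, 0, 0)}. null_deformation br i (ps_monom n x j) (b k) (c l))"
    unfolding ps_prod_simplex
    by (rule sum.mono_neutral_right) (auto simp: finite_simplex4 null_deformation_def ps_monom_def zero split: if_split_asm)
  then show "ps_prod (null_deformation br) (ps_monom n x) b c n = br x (b 0) (c 0)"
    by (simp add: null_deformation_def ps_monom_def)
  have "ps_prod (null_deformation br) a (ps_monom n x) c n
      = (\<Sum>(i, j, k, l)\<in>{(0, 0, n, 0)}. null_deformation br i (a j) (ps_monom n x k) (c l))"
    unfolding ps_prod_simplex
    by (rule sum.mono_neutral_right) (auto simp: finite_simplex4 null_deformation_def ps_monom_def zero split: if_split_asm)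
  then show "ps_prod (null_deformation br) a (ps_monom n x) c n = br (a 0) x (c 0)"
    by (simp add: null_deformation_def ps_monom_def)
  have "ps_prod (null_deformation br) a b (ps_monom n x) n
      = (\<Sum>(i, j, k, l)\<in>{(0, 0, 0, n)}. null_deformation br i (a j) (b k) (ps_monom n x l))"
    unfolding ps_prod_simplex
    by (rule sum.mono_neutral_right) (auto simp: finite_simplex4 null_deformation_def ps_monom_def zero split: if_split_asm)
  then show "ps_prod (null_deformation br) a b (ps_monom n x) n = br (a 0) (b 0) x"
    by (simp add: null_deformation_def ps_monom_def)
qed

lemma ps_prod_null_deformation_perturb:
  assumes br: "trilinear scale br" and "0 < n"
  shows "ps_prod (null_deformation br) (a + ps_monom n x) (b + ps_monom n y) (c + ps_monom n z) n
    = ps_prod (null_deformation br) a b c n + br x (b 0) (c 0) + br (a 0) y (c 0) + br (a 0) (b 0) z"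
proof -
  let ?P = "ps_prod (null_deformation br)"
  note P = ps_trilinear_linear[OF ps_trilinear_ps_prod[OF trilinear_null_deformation[OF br]]]
  have "?P (a + ps_monom n x) (b + ps_monom n y) (c + ps_monom n z) n = ?P a b c n + ?P a b (ps_monom n z) n
      + ?P a (ps_monom n y) (c + ps_monom n z) n + ?P (ps_monom n x) (b + ps_monom n y) (c + ps_monom n z) n"
    by (simp add: ps_linear_add[OF P(1)] ps_linear_add[OF P(2)] ps_linear_add[OF P(3)])
  moreover have "(b + ps_monom n y) 0 = b 0" "(c + ps_monom n z) 0 = c 0"
    using \<open>0 < n\<close> by (simp_all add: ps_monom_def)
  ultimately show ?thesis
    by (simp add: ps_prod_null_deformation_monomial[OF br])
qed

lemma ps_trilinear_ps_conj:
  assumes "\<phi> 0 = id" "\<And>i. Vector_Spaces.linear scale scale (\<phi> i)" "ps_trilinear scale P"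
  shows "ps_trilinear scale (ps_conj \<phi> P)"
proof -
  have M: "ps_linear scale (ps_app \<phi>)"
    by (rule ps_linear_ps_app[OF assms(2)])
  have "ps_linear scale (ps_inv \<phi>)"
  proof (rule ps_linear_inverse[OF M])
    show "ps_inv \<phi> (ps_app \<phi> a) = a" for a
      by (rule ps_inv_ps_app[of \<phi>, OF assms(1)])
    show "ps_app \<phi> (ps_inv \<phi> u) = u" for u
      by (rule ps_app_ps_inv[of \<phi>, OF assms(1)])
  qed
  then show ?thesis
    unfolding ps_conj_def by (rule ps_trilinear_compose_left[OF ps_trilinear_compose_right[OF assms(3)] M])
qed

end

section \<open>Graded vector spaces\<close>

locale graded_vector_space =
  fixes sc :: "'k::field \<Rightarrow> 'v::ab_group_add \<Rightarrow> 'v" and T0 T1 :: "'v set"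
  assumes graded_space: "graded_space sc T0 T1"
begin

sublocale vector_space sc
  using graded_space by (simp add: graded_space_def)

sublocale vsp: vector_space_pair sc sc ..

abbreviation H :: "nat \<Rightarrow> 'v set" where "H \<equiv> hom T0 T1"

lemma hom_subspace: "subspace (H d)"
  using graded_space by (simp add: graded_space_def hom_def)

lemmas hom_zero = subspace_0[OF hom_subspace]
  and hom_add = subspace_add[OF hom_subspace]
  and hom_diff = subspace_diff[OF hom_subspace]
  and hom_scale = subspace_scale[OF hom_subspace]
  and hom_sum = subspace_sum[OF hom_subspace]

lemma hom_Suc_Suc [simp]: "H (Suc (Suc d)) = H d"
  by (simp add: hom_def)

lemma hom_inter_hom_Suc: "x \<in> H d \<Longrightarrow> x \<in> H (Suc d) \<Longrightarrow> x = 0"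
  using graded_space by (auto simp: graded_space_def hom_def split: if_splits)

lemma hom_decomp: "\<exists>a\<in>H d. \<exists>b\<in>H (Suc d). v = a + b"
  using graded_space by (auto simp: graded_space_def hom_def) (metis add.commute)

lemma proj_parity_cong: "even m = even n \<Longrightarrow> proj T0 T1 m = proj T0 T1 n"
  unfolding proj_def by (rule ext) (simp add: hom_def)

lemma proj_unique: "a \<in> H d \<Longrightarrow> b \<in> H (Suc d) \<Longrightarrow> proj T0 T1 d (a + b) = a"
  unfolding proj_def
proof (rule the_equality)
  fix w assume a: "a \<in> H d" and b: "b \<in> H (Suc d)" and w: "w \<in> H d \<and> a + b - w \<in> H (Suc d)"
  have "a - w \<in> H d" using a w by (simp add: hom_diff)
  moreover have "a - w = (a + b - w) - b" by simp
  then have "a - w \<in> H (Suc d)" using b w hom_diff by metis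
  ultimately show "w = a" using hom_inter_hom_Suc by fastforce
qed simp

lemma proj_self: "a \<in> H d \<Longrightarrow> proj T0 T1 d a = a"
  using proj_unique[of a d 0] by (simp add: hom_zero)

lemma proj_other: "a \<in> H d \<Longrightarrow> proj T0 T1 (Suc d) a = 0"
  using proj_unique[of 0 "Suc d" a] by (simp add: hom_zero)

lemma proj_in_hom: "proj T0 T1 d v \<in> H d"
  using hom_decomp[of d v] proj_unique by auto

lemma proj_decomp: "v = proj T0 T1 d v + proj T0 T1 (Suc d) v"
proof -
  obtain a b where "a \<in> H d" "b \<in> H (Suc d)" "v = a + b"
    using hom_decomp by blast
  then show ?thesis
    using proj_unique[of a d b] proj_unique[of b "Suc d" a] by (simp add: add.commute)
qed

lemma proj_linear: "Vector_Spaces.linear sc sc (proj T0 T1 d)"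
proof -
  let ?p = "proj T0 T1 d" and ?q = "proj T0 T1 (Suc d)"
  have "?p (x + y) = ?p x + ?p y" for x y
  proof -
    have "x + y = (?p x + ?p y) + (?q x + ?q y)"
      using proj_decomp[of x d] proj_decomp[of y d] by (simp add: algebra_simps)
    then show ?thesis
      using proj_unique hom_add proj_in_hom by metis
  qed
  moreover have "?p (sc s x) = sc s (?p x)" for s x
  proof -
    have "sc s x = sc s (?p x) + sc s (?q x)"
      using proj_decomp[of x d] by (metis scale_right_distrib)
    then show ?thesis
      using proj_unique hom_scale proj_in_hom by metis
  qed
  ultimately show ?thesis
    by (simp add: Vector_Spaces.linear_iff vector_space_axioms)
qed

lemma additive3_eq_0_from_homogeneous:
  assumes "\<And>x x' y z. G (x + x') y z = G x y z + G x' y z" "\<And>x y y' z. G x (y + y') z = G x y z + G x y' z"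
    "\<And>x y z z'. G x y (z + z') = G x y z + G x y z'"
    and "\<And>x y z dx dy dz. x \<in> H dx \<Longrightarrow> y \<in> H dy \<Longrightarrow> z \<in> H dz \<Longrightarrow> G x y z = (0::'v)"
  shows "G x y z = 0"
proof -
  obtain x0 x1 y0 y1 z0 z1 where x: "x0 \<in> H 0" "x1 \<in> H 1" "x = x0 + x1"
    and y: "y0 \<in> H 0" "y1 \<in> H 1" "y = y0 + y1" and z: "z0 \<in> H 0" "z1 \<in> H 1" "z = z0 + z1"
    using hom_decomp[of 0] by (metis One_nat_def)
  have "G u v z = 0" if "u \<in> H du" "v \<in> H dv" for u v du dv
    unfolding z(3) assms(3) using assms(4)[OF that z(1)] assms(4)[OF that z(2)] by simp
  then show ?thesis
    unfolding x(3) y(3) assms(1,2) using x y by (metis add_0)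
qed

definition even_map :: "('v \<Rightarrow> 'v) \<Rightarrow> bool" where
  "even_map g \<longleftrightarrow> (\<forall>d x. x \<in> H d \<longrightarrow> g x \<in> H d)"

lemma even_mapD: "even_map g \<Longrightarrow> x \<in> H d \<Longrightarrow> g x \<in> H d"
  by (simp add: even_map_def)

definition even_map3 :: "('v \<Rightarrow> 'v \<Rightarrow> 'v \<Rightarrow> 'v) \<Rightarrow> bool" where
  "even_map3 F \<longleftrightarrow> (\<forall>dx dy dz x y z. x \<in> H dx \<longrightarrow> y \<in> H dy \<longrightarrow> z \<in> H dz \<longrightarrow> F x y z \<in> H (dx + dy + dz))"

lemma even_map3D: "even_map3 F \<Longrightarrow> x \<in> H dx \<Longrightarrow> y \<in> H dy \<Longrightarrow> z \<in> H dz \<Longrightarrow> F x y z \<in> H (dx + dy + dz)"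
  by (simp add: even_map3_def)

lemma ps_app_ps_hom: "(\<And>i. even_map (\<phi> i)) \<Longrightarrow> a \<in> ps_hom T0 T1 d \<Longrightarrow> ps_app \<phi> a \<in> ps_hom T0 T1 d"
  by (simp add: ps_hom_def ps_app_def even_map_def hom_sum)

lemma ps_inv_ps_hom:
  assumes "\<And>i. even_map (\<phi> i)" and "u \<in> ps_hom T0 T1 d"
  shows "ps_inv \<phi> u \<in> ps_hom T0 T1 d"
  unfolding ps_hom_def
proof (intro CollectI allI)
  fix n
  show "ps_inv \<phi> u n \<in> H d"
  proof (induction n rule: less_induct)
    case (less n)
    then show ?case
      using assms by (subst ps_inv.simps) (auto simp: ps_hom_def even_map_def intro!: hom_diff hom_sum)
  qed
qed

definition even_part :: "('v \<Rightarrow> 'v) \<Rightarrow> 'v \<Rightarrow> 'v" where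
  "even_part g x = proj T0 T1 0 (g (proj T0 T1 0 x)) + proj T0 T1 1 (g (proj T0 T1 1 x))"

lemma even_part_hom:
  assumes g: "Vector_Spaces.linear sc sc g" and x: "x \<in> H d"
  shows "even_part g x = proj T0 T1 d (g x)"
proof (cases "even d")
  case True
  then have x0: "x \<in> H 0"
    using x by (simp add: hom_def)
  have "proj T0 T1 1 x = 0"
    using proj_other[OF x0] by simp
  then show ?thesis
    using True proj_parity_cong[of d 0]
    by (simp add: even_part_def proj_self[OF x0] vsp.linear_0[OF g] vsp.linear_0[OF proj_linear])
next
  case False
  then have x1: "x \<in> H 1"
    using x by (simp add: hom_def)
  have "proj T0 T1 0 x = 0"
    using proj_other[OF x1] proj_parity_cong[of "Suc (Suc 0)" 0] by simp
  then show ?thesis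
    using False proj_parity_cong[of d 1] proj_self[OF x1]
    by (simp add: even_part_def vsp.linear_0[OF g] vsp.linear_0[OF proj_linear])
qed

lemma linear_even_part:
  assumes "Vector_Spaces.linear sc sc g"
  shows "Vector_Spaces.linear sc sc (even_part g)"
proof -
  have lin: "Vector_Spaces.linear sc sc (\<lambda>x. proj T0 T1 d (g (proj T0 T1 d x)))" for d
    using Vector_Spaces.linear_compose[OF Vector_Spaces.linear_compose[OF proj_linear assms] proj_linear]
    by (simp add: o_def)
  show ?thesis
    unfolding even_part_def by (rule vsp.linear_compose_add[OF lin[of 0] lin[of 1]])
qed

lemma even_map_even_part: "Vector_Spaces.linear sc sc g \<Longrightarrow> even_map (even_part g)"
  unfolding even_map_def using even_part_hom proj_in_hom by metis

definition even_formal_automorphism :: "(nat \<Rightarrow> 'v \<Rightarrow> 'v) \<Rightarrow> bool" where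
  "even_formal_automorphism \<phi> \<longleftrightarrow> \<phi> 0 = id \<and> (\<forall>i. Vector_Spaces.linear sc sc (\<phi> i)) \<and> (\<forall>i. even_map (\<phi> i))"

end

locale jlsts_system =
  fixes sc :: "'k::field \<Rightarrow> 'v::ab_group_add \<Rightarrow> 'v"
    and T0 T1 :: "'v set" and \<delta> :: 'k and br :: "'v \<Rightarrow> 'v \<Rightarrow> 'v \<Rightarrow> 'v"
  assumes jlsts: "jlsts sc T0 T1 \<delta> br"
begin

sublocale graded_vector_space sc T0 T1
  using jlsts by unfold_locales (simp add: jlsts_def)

lemma delta_square: "\<delta> * \<delta> = 1"
  using jlsts by (auto simp: jlsts_def)

lemma br_trilinear: "trilinear sc br"
  using jlsts by (simp add: jlsts_def)

lemma br_jlsts_ax: "jlsts_ax (+) 0 sc H \<delta> br"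
  using jlsts by (simp add: jlsts_def)

lemmas br_zero = trilinear_zero[OF br_trilinear]
  and br_hom = jlsts_ax_hom[OF br_jlsts_ax]
  and br_swap = jlsts_ax_swap[OF br_jlsts_ax]

lemma delta_sg_square: "\<delta> * sg n * (\<delta> * sg n) = 1"
proof -
  have "\<delta> * sg n * (\<delta> * sg n) = (\<delta> * \<delta>) * (sg n * sg n :: 'k)"
    by (simp only: ac_simps)
  then show ?thesis
    by (simp add: delta_square)
qed

lemma scale_delta_delta: "sc \<delta> (sc \<delta> v) = v"
  by (simp add: delta_square)

lemma scale_delta_sg: "sc (sg n) (sc \<delta> v) = sc (\<delta> * sg n) v"
  by (simp add: mult.commute)

lemma theta_same_sign: "sc (sg (dx * (da + db))) (theta sc br a da b db x dx) = br x a b"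
  by (simp add: theta_def)

lemma theta_swap:
  assumes "a \<in> H da" "x \<in> H dx" "b \<in> H db"
  shows "theta sc br a da b db x dx = sc (- \<delta> * sg (dx * db)) (br a x b)"
proof -
  have "sg (dx * (da + db)) * sg (da * dx) = (sg (dx * db) :: 'k)"
    by (simp only: sg_add[symmetric]) (rule sg_parity_cong, auto)
  then have "sg (dx * (da + db)) * (- \<delta> * sg (da * dx)) = - \<delta> * sg (dx * db)"
    by (simp add: algebra_simps)
  then show ?thesis
    by (simp add: theta_def br_swap[OF assms])
qed

section \<open>Cocycles and coboundaries\<close>

lemma comp3_even:
  assumes "even_map3 F" "x \<in> H dx" "y \<in> H dy" "z \<in> H dz"
  shows "comp3 T0 T1 F 0 x dx y dy z dz = F x y z"
  using proj_self[OF even_map3D[OF assms]] by (simp add: comp3_def)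

lemma comp3_odd:
  assumes "even_map3 F" "x \<in> H dx" "y \<in> H dy" "z \<in> H dz"
  shows "comp3 T0 T1 F 1 x dx y dy z dz = 0"
  using proj_other[OF even_map3D[OF assms]] by (simp add: comp3_def)

lemma d3hom_odd_component:
  assumes "even_map3 F"
    and "x1 \<in> H d1" "x2 \<in> H d2" "x3 \<in> H d3" "x4 \<in> H d4" "x5 \<in> H d5"
  shows "d3hom sc br \<delta> (comp3 T0 T1 F 1) 1 x1 d1 x2 d2 x3 d3 x4 d4 x5 d5 = 0"
  using assms(2-)
  by (simp only: d3hom_def comp3_odd[OF assms(1)] br_hom) (simp add: theta_def Dop_def br_zero)

lemma d3hom_even_component:
  assumes F: "even_map3 F"
    and h: "x1 \<in> H d1" "x2 \<in> H d2" "x3 \<in> H d3" "x4 \<in> H d4" "x5 \<in> H d5"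
  shows "d3hom sc br \<delta> (comp3 T0 T1 F 0) 0 x1 d1 x2 d2 x3 d3 x4 d4 x5 d5 =
      br (F x1 x2 x3) x4 x5 + sc (sg (d3 * (d1 + d2))) (br x3 (F x1 x2 x4) x5) - br x1 x2 (F x3 x4 x5)
    + sc (\<delta> * sg ((d1 + d2) * (d3 + d4))) (br x3 x4 (F x1 x2 x5))
    + F (br x1 x2 x3) x4 x5 - F x1 x2 (br x3 x4 x5) + sc (sg (d3 * (d1 + d2))) (F x3 (br x1 x2 x4) x5)
    + sc (\<delta> * sg ((d1 + d2) * (d3 + d4))) (F x3 x4 (br x1 x2 x5))"
proof -
  have "\<delta> * sg ((d1 + d2) * (d3 + d5) + d4 * d5) * (- \<delta> * sg ((d1 + d2 + d4) * d5))
      = - (\<delta> * \<delta>) * sg ((d1 + d2) * (d3 + d5) + d4 * d5 + (d1 + d2 + d4) * d5)"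
    by (simp add: sg_add)
  also have "\<dots> = - sg (d3 * (d1 + d2))"
    by (simp add: delta_square) (rule sg_parity_cong, auto)
  finally have "sc (\<delta> * sg ((d1 + d2) * (d3 + d5) + d4 * d5))
      (theta sc br x3 d3 x5 d5 (F x1 x2 x4) (d1 + d2 + d4)) = - sc (sg (d3 * (d1 + d2))) (br x3 (F x1 x2 x4) x5)"
    by (simp add: theta_swap[OF h(3) even_map3D[OF F h(1,2,4)] h(5)])
  then show ?thesis
    using h by (simp add: d3hom_def comp3_even[OF F] br_hom theta_same_sign Dop_def scale_delta_sg
        scale_delta_delta del: scale_scale)
qed

text \<open>The last hypothesis is the coefficient of \<open>t\<close> in (A4) for the product \<open>[\<cdot>,\<cdot>,\<cdot>] + t F\<close>.\<close>
lemma Z3_memberI: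
  assumes F: "trilinear sc F" "even_map3 F"
    and swap: "\<And>x y z dx dy dz. x \<in> H dx \<Longrightarrow> y \<in> H dy \<Longrightarrow> z \<in> H dz \<Longrightarrow>
      F y x z = sc (- \<delta> * sg (dx * dy)) (F x y z)"
    and cyclic: "\<And>x y z dx dy dz. x \<in> H dx \<Longrightarrow> y \<in> H dy \<Longrightarrow> z \<in> H dz \<Longrightarrow>
      sc (sg (dx * dz)) (F x y z) + sc (sg (dy * dx)) (F y z x) + sc (sg (dz * dy)) (F z x y) = 0"
    and derivation: "\<And>a b c d e da db dc dd de. a \<in> H da \<Longrightarrow> b \<in> H db \<Longrightarrow> c \<in> H dc \<Longrightarrow>
      d \<in> H dd \<Longrightarrow> e \<in> H de \<Longrightarrow> br a b (F c d e) + F a b (br c d e) =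
        (br (F a b c) d e + F (br a b c) d e)
      + sc (sg (dc * (da + db))) (br c (F a b d) e + F c (br a b d) e)
      + sc (\<delta> * sg ((da + db) * (dc + dd))) (br c d (F a b e) + F c d (br a b e))"
  shows "F \<in> Z3 sc T0 T1 \<delta> br"
proof -
  have "d3hom sc br \<delta> (comp3 T0 T1 F 0) 0 x1 d1 x2 d2 x3 d3 x4 d4 x5 d5
      + d3hom sc br \<delta> (comp3 T0 T1 F 1) 1 x1 d1 x2 d2 x3 d3 x4 d4 x5 d5 = 0"
    if h: "x1 \<in> H d1" "x2 \<in> H d2" "x3 \<in> H d3" "x4 \<in> H d4" "x5 \<in> H d5"
    for d1 d2 d3 d4 d5 x1 x2 x3 x4 x5
    unfolding d3hom_even_component[OF F(2) h] d3hom_odd_component[OF F(2) h]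
    using derivation[OF h] by (simp add: algebra_simps)
  then show ?thesis
    unfolding Z3_def C3_def using F(1) swap cyclic by (intro CollectI conjI allI impI) blast+
qed

definition d1_even :: "('v \<Rightarrow> 'v) \<Rightarrow> 'v \<Rightarrow> 'v \<Rightarrow> 'v \<Rightarrow> 'v" where
  "d1_even g x y z = br (g x) y z + br x (g y) z + br x y (g z) - g (br x y z)"

lemma d1hom_even_component:
  assumes g: "Vector_Spaces.linear sc sc g" and h: "x1 \<in> H d1" "x2 \<in> H d2" "x3 \<in> H d3"
  shows "d1hom sc br \<delta> (comp1 T0 T1 g 0) 0 x1 d1 x2 d2 x3 d3 = d1_even (even_part g) x1 x2 x3"
proof -
  have comp: "comp1 T0 T1 g 0 x d = even_part g x" if "x \<in> H d" for x d
    using even_part_hom[OF g that] by (simp add: comp1_def)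
  have "sc (\<delta> * sg (d2 * d3)) (theta sc br x1 d1 x3 d3 (even_part g x2) d2) = - br x1 (even_part g x2) x3"
    using h by (simp add: theta_swap even_map_even_part[OF g, unfolded even_map_def] delta_sg_square)
  then show ?thesis
    using h by (simp add: d1hom_def d1_even_def comp br_hom theta_same_sign Dop_def scale_delta_delta
        del: scale_scale)
qed

lemma d1hom_odd_component_hom:
  assumes h: "x1 \<in> H d1" "x2 \<in> H d2" "x3 \<in> H d3"
  shows "d1hom sc br \<delta> (comp1 T0 T1 g 1) 1 x1 d1 x2 d2 x3 d3 \<in> H (Suc (d1 + d2 + d3))"
proof -
  have "br (proj T0 T1 (d1 + 1) (g x1)) x2 x3 \<in> H (d1 + 1 + d2 + d3)"
    "br x1 x2 (proj T0 T1 (d3 + 1) (g x3)) \<in> H (d1 + d2 + (d3 + 1))"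
    "br (proj T0 T1 (d2 + 1) (g x2)) x1 x3 \<in> H (d2 + 1 + d1 + d3)"
    "proj T0 T1 (d1 + d2 + d3 + 1) (g (br x1 x2 x3)) \<in> H (d1 + d2 + d3 + 1)"
    by (intro br_hom proj_in_hom h)+
  then show ?thesis
    unfolding d1hom_def theta_def Dop_def comp1_def by (simp add: hom_add hom_diff hom_scale add_ac)
qed

lemma B3_even_coboundary:
  assumes "F \<in> B3 sc T0 T1 \<delta> br" and F: "even_map3 F"
  obtains g where "Vector_Spaces.linear sc sc g" "even_map g"
    "\<And>x y z dx dy dz. x \<in> H dx \<Longrightarrow> y \<in> H dy \<Longrightarrow> z \<in> H dz \<Longrightarrow> F x y z = d1_even g x y z"
proof -
  obtain g where g: "Vector_Spaces.linear sc sc g"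
    and F_eq: "\<And>d1 d2 d3 x1 x2 x3. x1 \<in> H d1 \<Longrightarrow> x2 \<in> H d2 \<Longrightarrow> x3 \<in> H d3 \<Longrightarrow>
        F x1 x2 x3 = d1hom sc br \<delta> (comp1 T0 T1 g 0) 0 x1 d1 x2 d2 x3 d3
                   + d1hom sc br \<delta> (comp1 T0 T1 g 1) 1 x1 d1 x2 d2 x3 d3"
    using assms(1) unfolding B3_def by blast
  have "F x y z = d1_even (even_part g) x y z" if h: "x \<in> H dx" "y \<in> H dy" "z \<in> H dz" for x y z dx dy dz
  proof -
    let ?odd = "d1hom sc br \<delta> (comp1 T0 T1 g 1) 1 x dx y dy z dz"
    note g_even = even_mapD[OF even_map_even_part[OF g]]
    have "d1_even (even_part g) x y z \<in> H (dx + dy + dz)"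
      unfolding d1_even_def by (intro hom_add hom_diff br_hom g_even h)
    moreover have "?odd = F x y z - d1_even (even_part g) x y z"
      using F_eq[OF h] d1hom_even_component[OF g h] by simp
    ultimately have "?odd \<in> H (dx + dy + dz)"
      using even_map3D[OF F h] hom_diff by simp
    then have "?odd = 0"
      using hom_inter_hom_Suc d1hom_odd_component_hom[OF h] by blast
    then show ?thesis
      using F_eq[OF h] d1hom_even_component[OF g h] by simp
  qed
  then show ?thesis
    using that linear_even_part[OF g] even_map_even_part[OF g] by blast
qed

section \<open>Deformations\<close>

lemma ps_const_ps_hom: "x \<in> H d \<Longrightarrow> ps_const x \<in> ps_hom T0 T1 d"
  by (simp add: ps_hom_def ps_const_def hom_zero)

lemma deformation_leading_term:
  assumes q: "deformation sc T0 T1 \<delta> br q" and N: "0 < N"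
    and gap: "\<And>i. 0 < i \<Longrightarrow> i < N \<Longrightarrow> q i = (\<lambda>x y z. 0)"
  shows "even_map3 (q N)" and "q N \<in> Z3 sc T0 T1 \<delta> br"
proof -
  let ?P = "ps_prod q" and ?c = "ps_const"
  have q_tri: "\<And>i. trilinear sc (q i)" and q0: "q 0 = br"
    and ax: "jlsts_ax ps_add (\<lambda>n. 0) (ps_scale sc) (ps_hom T0 T1) \<delta> ?P"
    using q by (simp_all add: deformation_def)
  note coeff = ps_prod_const[OF q_tri]
  note sandwich = ps_prod_const_const_gap[OF q_tri N gap, unfolded q0]
  have hom: "q N x y z \<in> H (dx + dy + dz)" if "x \<in> H dx" "y \<in> H dy" "z \<in> H dz" for x y z dx dy dz
    using jlsts_ax_hom[OF ax ps_const_ps_hom[OF that(1)] ps_const_ps_hom[OF that(2)]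
        ps_const_ps_hom[OF that(3)]]
    by (simp add: ps_hom_def coeff)
  then show "even_map3 (q N)"
    by (simp add: even_map3_def)
  show "q N \<in> Z3 sc T0 T1 \<delta> br"
  proof (rule Z3_memberI[OF q_tri \<open>even_map3 (q N)\<close>])
    fix x y z dx dy dz
    assume h: "x \<in> H dx" "y \<in> H dy" "z \<in> H dz"
    note cst = ps_const_ps_hom[OF h(1)] ps_const_ps_hom[OF h(2)] ps_const_ps_hom[OF h(3)]
    show "q N y x z = sc (- \<delta> * sg (dx * dy)) (q N x y z)"
      using fun_cong[OF jlsts_ax_swap[OF ax cst], of N] by (simp add: coeff)
    show "sc (sg (dx * dz)) (q N x y z) + sc (sg (dy * dx)) (q N y z x) + sc (sg (dz * dy)) (q N z x y) = 0"
      using fun_cong[OF jlsts_ax_cyclic[OF ax cst], of N] by (simp add: coeff ps_add_def)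
  next
    fix a b c d e da db dc dd de
    assume "a \<in> H da" "b \<in> H db" "c \<in> H dc" "d \<in> H dd" "e \<in> H de"
    note cst = this[THEN ps_const_ps_hom]
    show "br a b (q N c d e) + q N a b (br c d e) =
        (br (q N a b c) d e + q N (br a b c) d e)
      + sc (sg (dc * (da + db))) (br c (q N a b d) e + q N c (br a b d) e)
      + sc (\<delta> * sg ((da + db) * (dc + dd))) (br c d (q N a b e) + q N c d (br a b e))"
      using fun_cong[OF jlsts_ax_derivation[OF ax cst], of N]
      by (simp add: sandwich coeff q0 ps_add_def)
  qed
qed

lemma deformation_ps_conj:
  assumes f: "deformation sc T0 T1 \<delta> br f" and \<phi>: "even_formal_automorphism \<phi>"
  shows "deformation sc T0 T1 \<delta> br (ps_coeffs (ps_conj \<phi> (ps_prod f)))"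
proof -
  have f_tri: "\<And>i. trilinear sc (f i)" and f0: "f 0 = br"
    and ax: "jlsts_ax ps_add (\<lambda>n. 0) (ps_scale sc) (ps_hom T0 T1) \<delta> (ps_prod f)"
    using f by (simp_all add: deformation_def)
  have \<phi>0: "\<phi> 0 = id" and lin: "\<And>i. Vector_Spaces.linear sc sc (\<phi> i)" and even: "\<And>i. even_map (\<phi> i)"
    using \<phi> by (simp_all add: even_formal_automorphism_def)
  let ?Q = "ps_conj \<phi> (ps_prod f)"
  have Q: "ps_trilinear sc ?Q"
    by (rule ps_trilinear_ps_conj[of \<phi>, OF \<phi>0 lin ps_trilinear_ps_prod[OF f_tri]])
  have M: "ps_linear sc (ps_app \<phi>)"
    by (rule ps_linear_ps_app[OF lin])
  have "jlsts_ax ps_add (\<lambda>n. 0) (ps_scale sc) (ps_hom T0 T1) \<delta> ?Q"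
    unfolding ps_conj_def
  proof (rule jlsts_ax_transport[OF ax])
    show "ps_app \<phi> (ps_add a b) = ps_add (ps_app \<phi> a) (ps_app \<phi> b)" for a b
      by (simp add: ps_add_eq_plus ps_linear_add[OF M])
    show "ps_app \<phi> (ps_scale sc s a) = ps_scale sc s (ps_app \<phi> a)" for s a
      by (rule ps_linear_scale[OF M])
    show "ps_app \<phi> (\<lambda>n. 0) = (\<lambda>n. 0)"
      using ps_linear_zero[OF M] by (simp add: zero_fun_def)
    show "ps_inv \<phi> (ps_app \<phi> a) = a" for a
      by (rule ps_inv_ps_app[of \<phi>, OF \<phi>0])
    show "a \<in> ps_hom T0 T1 d \<Longrightarrow> ps_app \<phi> a \<in> ps_hom T0 T1 d" for a d
      by (rule ps_app_ps_hom[OF even])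
    show "a \<in> ps_hom T0 T1 d \<Longrightarrow> ps_inv \<phi> a \<in> ps_hom T0 T1 d" for a d
      by (rule ps_inv_ps_hom[OF even])
  qed
  moreover have "ps_coeffs ?Q 0 = br"
    by (simp add: fun_eq_iff ps_coeffs_def ps_conj_def ps_app_0[of \<phi>, OF \<phi>0] ps_prod_0 ps_inv_0 f0)
  ultimately show ?thesis
    unfolding deformation_def ps_prod_ps_coeffs[OF Q] using trilinear_ps_coeffs[OF Q] by simp
qed

end

section \<open>Rigidity\<close>

locale jlsts_deformation = jlsts_system sc T0 T1 \<delta> br
  for sc :: "'k::field \<Rightarrow> 'v::ab_group_add \<Rightarrow> 'v" and T0 T1 \<delta> br +
  fixes f :: "nat \<Rightarrow> 'v \<Rightarrow> 'v \<Rightarrow> 'v \<Rightarrow> 'v"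
  assumes deformation: "deformation sc T0 T1 \<delta> br f"
begin

lemma f_trilinear: "trilinear sc (f i)" and f_0: "f 0 = br"
  using deformation by (simp_all add: deformation_def)

definition defect :: "(nat \<Rightarrow> 'v \<Rightarrow> 'v) \<Rightarrow> (nat \<Rightarrow> 'v) \<Rightarrow> (nat \<Rightarrow> 'v) \<Rightarrow> (nat \<Rightarrow> 'v) \<Rightarrow> nat \<Rightarrow> 'v" where
  "defect \<phi> a b c = ps_app \<phi> (ps_prod f a b c)
     - ps_prod (null_deformation br) (ps_app \<phi> a) (ps_app \<phi> b) (ps_app \<phi> c)"

lemma ps_trilinear_defect:
  assumes "\<And>i. Vector_Spaces.linear sc sc (\<phi> i)"
  shows "ps_trilinear sc (defect \<phi>)"
proof -
  have M: "ps_linear sc (ps_app \<phi>)"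
    by (rule ps_linear_ps_app[OF assms])
  show ?thesis
    unfolding defect_def[abs_def]
    by (rule ps_trilinear_diff[OF ps_trilinear_compose_left[OF ps_trilinear_ps_prod[OF f_trilinear] M]
          ps_trilinear_compose_right[OF ps_trilinear_ps_prod[OF trilinear_null_deformation[OF br_trilinear]] M]])
qed

lemma defect_0: "\<phi> 0 = id \<Longrightarrow> defect \<phi> a b c 0 = 0"
  by (simp add: defect_def ps_app_0 ps_prod_0 f_0 null_deformation_def)

lemma defect_causal:
  assumes "\<And>i. i \<le> n \<Longrightarrow> \<phi> i = \<phi>' i"
  shows "defect \<phi> a b c n = defect \<phi>' a b c n"
proof -
  have app: "ps_app \<phi> u j = ps_app \<phi>' u j" if "j \<le> n" for u j
    using assms that by (intro ps_app_causal) auto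
  have "ps_prod (null_deformation br) (ps_app \<phi> a) (ps_app \<phi> b) (ps_app \<phi> c) n
      = ps_prod (null_deformation br) (ps_app \<phi>' a) (ps_app \<phi>' b) (ps_app \<phi>' c) n"
    by (rule ps_prod_causal) (simp_all add: app)
  then show ?thesis
    by (simp add: defect_def app)
qed

lemma ps_conj_eq_defect:
  assumes "\<phi> 0 = id"
  shows "ps_conj \<phi> (ps_prod f) u v w
    = ps_prod (null_deformation br) u v w + defect \<phi> (ps_inv \<phi> u) (ps_inv \<phi> v) (ps_inv \<phi> w)"
  by (simp add: ps_conj_def defect_def ps_app_ps_inv[of \<phi>, OF assms])

lemma leading_defect_cocycle:
  assumes \<psi>: "even_formal_automorphism \<psi>" and N: "0 < N"
    and low: "\<And>x y z m. m < N \<Longrightarrow> defect \<psi> (ps_const x) (ps_const y) (ps_const z) m = 0"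
  shows "even_map3 (\<lambda>x y z. defect \<psi> (ps_const x) (ps_const y) (ps_const z) N)"
    and "(\<lambda>x y z. defect \<psi> (ps_const x) (ps_const y) (ps_const z) N) \<in> Z3 sc T0 T1 \<delta> br"
proof -
  have \<psi>0: "\<psi> 0 = id" and lin: "\<And>i. Vector_Spaces.linear sc sc (\<psi> i)"
    using \<psi> by (simp_all add: even_formal_automorphism_def)
  note E = ps_trilinear_defect[OF lin]
  define q where "q = ps_coeffs (ps_conj \<psi> (ps_prod f))"
  have q: "deformation sc T0 T1 \<delta> br q"
    unfolding q_def by (rule deformation_ps_conj[OF deformation \<psi>])
  have q_eq: "q i x y z = null_deformation br i x y z
      + defect \<psi> (ps_inv \<psi> (ps_const x)) (ps_inv \<psi> (ps_const y)) (ps_inv \<psi> (ps_const z)) i" for i x y z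
    by (simp add: q_def ps_coeffs_def ps_conj_eq_defect[of \<psi>, OF \<psi>0]
        ps_prod_const[OF trilinear_null_deformation[OF br_trilinear]])
  have gap: "q i = (\<lambda>x y z. 0)" if "0 < i" "i < N" for i
    using that by (simp add: fun_eq_iff q_eq null_deformation_def ps_trilinear_coeff_eq_0[OF E low])
  have "q N = (\<lambda>x y z. defect \<psi> (ps_const x) (ps_const y) (ps_const z) N)"
  proof (intro ext)
    fix x y z
    show "q N x y z = defect \<psi> (ps_const x) (ps_const y) (ps_const z) N"
      using N ps_trilinear_coeff_eq_const[OF E low, where a="ps_inv \<psi> (ps_const x)"
          and b="ps_inv \<psi> (ps_const y)" and c="ps_inv \<psi> (ps_const z)"]
      by (simp add: q_eq null_deformation_def ps_inv_0)
  qed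
  then show "even_map3 (\<lambda>x y z. defect \<psi> (ps_const x) (ps_const y) (ps_const z) N)"
    and "(\<lambda>x y z. defect \<psi> (ps_const x) (ps_const y) (ps_const z) N) \<in> Z3 sc T0 T1 \<delta> br"
    using deformation_leading_term[OF q N gap] by simp_all
qed

lemma defect_update:
  assumes \<psi>0: "\<psi> 0 = id" and lin: "\<And>i. Vector_Spaces.linear sc sc (\<psi> i)" and \<psi>N: "\<psi> N = (\<lambda>x. 0)"
    and N: "0 < N" and g: "Vector_Spaces.linear sc sc g"
  shows "defect (\<psi>(N := g)) (ps_const x) (ps_const y) (ps_const z) N
    = defect \<psi> (ps_const x) (ps_const y) (ps_const z) N - d1_even g x y z"
proof -
  have lin': "Vector_Spaces.linear sc sc ((\<psi>(N := g)) i)" for i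
    by (simp add: lin g)
  have app: "ps_app (\<psi>(N := g)) (ps_const u) = ps_app \<psi> (ps_const u) + ps_monom N (g u)" for u
    by (simp add: fun_eq_iff ps_app_const[OF lin'] ps_app_const[OF lin] ps_monom_def \<psi>N)
  have "ps_app (\<psi>(N := g)) (ps_prod f (ps_const x) (ps_const y) (ps_const z)) N
      = ps_app \<psi> (ps_prod f (ps_const x) (ps_const y) (ps_const z)) N + g (br x y z)"
    by (simp add: ps_app_update[of \<psi>, OF \<psi>N] ps_prod_0 f_0)
  moreover have "ps_prod (null_deformation br) (ps_app (\<psi>(N := g)) (ps_const x))
        (ps_app (\<psi>(N := g)) (ps_const y)) (ps_app (\<psi>(N := g)) (ps_const z)) N
      = ps_prod (null_deformation br) (ps_app \<psi> (ps_const x)) (ps_app \<psi> (ps_const y)) (ps_app \<psi> (ps_const z)) N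
        + br (g x) y z + br x (g y) z + br x y (g z)"
    by (simp add: app ps_prod_null_deformation_perturb[OF br_trilinear N] ps_app_0[of \<psi>, OF \<psi>0])
  ultimately show ?thesis
    by (simp add: defect_def d1_even_def algebra_simps)
qed

lemma defect_correction_exists:
  assumes H3: "H3_zero sc T0 T1 \<delta> br" and \<psi>: "even_formal_automorphism \<psi>" and \<psi>N: "\<psi> N = (\<lambda>x. 0)"
    and N: "0 < N" and low: "\<And>x y z m. m < N \<Longrightarrow> defect \<psi> (ps_const x) (ps_const y) (ps_const z) m = 0"
  shows "\<exists>g. Vector_Spaces.linear sc sc g \<and> even_map g
    \<and> (\<forall>x y z. defect (\<psi>(N := g)) (ps_const x) (ps_const y) (ps_const z) N = 0)"
proof -
  have \<psi>0: "\<psi> 0 = id" and lin: "\<And>i. Vector_Spaces.linear sc sc (\<psi> i)"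
    using \<psi> by (simp_all add: even_formal_automorphism_def)
  let ?F = "\<lambda>x y z. defect \<psi> (ps_const x) (ps_const y) (ps_const z) N"
  have "?F \<in> B3 sc T0 T1 \<delta> br"
    using leading_defect_cocycle(2)[OF \<psi> N low] H3 by (auto simp: H3_zero_def)
  then obtain g where g: "Vector_Spaces.linear sc sc g" "even_map g"
    and F: "\<And>x y z dx dy dz. x \<in> H dx \<Longrightarrow> y \<in> H dy \<Longrightarrow> z \<in> H dz \<Longrightarrow> ?F x y z = d1_even g x y z"
    using B3_even_coboundary leading_defect_cocycle(1)[OF \<psi> N low] by blast
  have lin': "Vector_Spaces.linear sc sc ((\<psi>(N := g)) i)" for i
    by (simp add: lin g)
  note E = ps_trilinear_defect[of "\<psi>(N := g)", OF lin']
  define G where "G x y z = defect (\<psi>(N := g)) (ps_const x) (ps_const y) (ps_const z) N" for x y z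
  have "G x y z = 0" for x y z
  proof (rule additive3_eq_0_from_homogeneous[where G=G])
    show "G (x + x') y z = G x y z + G x' y z" for x x' y z
      by (simp add: G_def ps_trilinear_const_add[OF E])
    show "G x (y + y') z = G x y z + G x y' z" for x y y' z
      by (simp add: G_def ps_trilinear_const_add[OF E])
    show "G x y (z + z') = G x y z + G x y z'" for x y z z'
      by (simp add: G_def ps_trilinear_const_add[OF E])
    show "G x y z = 0" if "x \<in> H dx" "y \<in> H dy" "z \<in> H dz" for x y z dx dy dz
      using that by (simp add: G_def defect_update[OF \<psi>0 lin \<psi>N N g(1)] F)
  qed
  then show ?thesis
    using g by (auto simp: G_def)
qed

definition correction :: "(nat \<Rightarrow> 'v \<Rightarrow> 'v) \<Rightarrow> nat \<Rightarrow> 'v \<Rightarrow> 'v" where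
  "correction \<psi> N = (SOME g. Vector_Spaces.linear sc sc g \<and> even_map g
     \<and> (\<forall>x y z. defect (\<psi>(N := g)) (ps_const x) (ps_const y) (ps_const z) N = 0))"

primrec approx :: "nat \<Rightarrow> nat \<Rightarrow> 'v \<Rightarrow> 'v" where
  "approx 0 = (\<lambda>i. if i = 0 then id else (\<lambda>x. 0))"
| "approx (Suc n) = (approx n)(Suc n := correction (approx n) (Suc n))"

lemma approx_stable: "i \<le> n \<Longrightarrow> approx n i = approx i i"
  by (induction n) (auto simp: le_Suc_eq)

lemma approx_properties:
  assumes H3: "H3_zero sc T0 T1 \<delta> br"
  shows "even_formal_automorphism (approx n) \<and> (\<forall>i>n. approx n i = (\<lambda>x. 0))
    \<and> (\<forall>x y z m. m \<le> n \<longrightarrow> defect (approx n) (ps_const x) (ps_const y) (ps_const z) m = 0)"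
proof (induction n)
  case 0
  have "even_formal_automorphism (approx 0)"
    by (simp add: even_formal_automorphism_def even_map_def linear_id hom_zero vsp.linear_zero)
  then show ?case
    by (simp add: defect_0 even_formal_automorphism_def)
next
  case (Suc n)
  let ?g = "correction (approx n) (Suc n)"
  have \<psi>: "even_formal_automorphism (approx n)" and \<psi>_Suc: "approx n (Suc n) = (\<lambda>x. 0)"
    and low: "\<And>x y z m. m < Suc n \<Longrightarrow> defect (approx n) (ps_const x) (ps_const y) (ps_const z) m = 0"
    using Suc.IH by auto
  have g: "Vector_Spaces.linear sc sc ?g" "even_map ?g"
    and top: "\<And>x y z. defect (approx (Suc n)) (ps_const x) (ps_const y) (ps_const z) (Suc n) = 0"
    using someI_ex[OF defect_correction_exists[OF H3 \<psi> \<psi>_Suc _ low]]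
    unfolding approx.simps correction_def[symmetric] by simp_all
  have "defect (approx (Suc n)) (ps_const x) (ps_const y) (ps_const z) m = 0" if "m \<le> Suc n" for x y z m
  proof (cases "m = Suc n")
    case False
    then have "defect (approx (Suc n)) (ps_const x) (ps_const y) (ps_const z) m
        = defect (approx n) (ps_const x) (ps_const y) (ps_const z) m"
      using that by (intro defect_causal) simp
    then show ?thesis
      using False that low by simp
  qed (use top in simp)
  moreover have "even_formal_automorphism (approx (Suc n))"
    using \<psi> g by (simp add: even_formal_automorphism_def)
  moreover have "\<forall>i>Suc n. approx (Suc n) i = (\<lambda>x. 0)"
    using Suc.IH by simp
  ultimately show ?case
    by blast
qed

theorem equivalent_null_deformation:
  assumes H3: "H3_zero sc T0 T1 \<delta> br"
  shows "equivalent_deformations sc f (null_deformation br)"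
proof -
  define \<phi> where "\<phi> i = approx i i" for i
  have \<phi>: "even_formal_automorphism \<phi>"
    using approx_properties[OF H3] by (simp add: \<phi>_def even_formal_automorphism_def)
  have "defect \<phi> (ps_const x) (ps_const y) (ps_const z) n = 0" for x y z n
  proof -
    have "defect \<phi> (ps_const x) (ps_const y) (ps_const z) n = defect (approx n) (ps_const x) (ps_const y) (ps_const z) n"
    proof (rule defect_causal)
      fix i
      assume "i \<le> n"
      then show "\<phi> i = approx n i"
        using approx_stable[of i n] by (simp add: \<phi>_def)
    qed
    then show ?thesis
      using approx_properties[OF H3, of n] by simp
  qed
  then have "defect \<phi> (ps_const x) (ps_const y) (ps_const z) = 0" for x y z
    by (simp add: fun_eq_iff)
  moreover have "ps_trilinear sc (defect \<phi>)"
    using \<phi> by (intro ps_trilinear_defect) (simp add: even_formal_automorphism_def)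
  ultimately have "defect \<phi> a b c = 0" for a b c
    by (blast intro: ps_trilinear_eq_0I)
  then have "ps_app \<phi> (ps_prod f a b c)
      = ps_prod (null_deformation br) (ps_app \<phi> a) (ps_app \<phi> b) (ps_app \<phi> c)" for a b c
    by (simp add: defect_def)
  then show ?thesis
    using \<phi> unfolding equivalent_deformations_def even_formal_automorphism_def by blast
qed

end

theorem theorem4p5:
  fixes sc :: "'k::field \<Rightarrow> 'v::ab_group_add \<Rightarrow> 'v"
    and T0 T1 :: "'v set" and \<delta> :: 'k and br :: "'v \<Rightarrow> 'v \<Rightarrow> 'v \<Rightarrow> 'v"
  assumes "jlsts sc T0 T1 \<delta> br"
    and "H3_zero sc T0 T1 \<delta> br"
  shows "\<forall>f. deformation sc T0 T1 \<delta> br f \<longrightarrow>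
           equivalent_deformations sc f (null_deformation br)"
proof (intro allI impI)
  fix f
  assume "deformation sc T0 T1 \<delta> br f"
  then interpret jlsts_deformation sc T0 T1 \<delta> br f
    using assms(1) by (intro jlsts_deformation.intro jlsts_system.intro jlsts_deformation_axioms.intro)
  show "equivalent_deformations sc f (null_deformation br)"
    by (rule equivalent_null_deformation[OF assms(2)])
qed

end
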